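(* Let $1\le k\le n$, $h=\mathcal D_K(x^{\epsilon_k+\epsilon_{-k}})$, $e=\mathcal D_K(x^{\epsilon_k+\epsilon_0})$ (so $[h,e]=e$). The twist of the standard Hopf algebra $U(\mathbf K^+_{\mathbb Z})[[t]]$ by $\mathcal F=\sum_{r\ge0}\frac{(-1)^r}{r!}h^{[r]}\otimes e^rt^r$, with product undeformed, satisfies for all $\alpha\in\mathbb Z^{2n+1}_{\ge0}$: $$\Delta(\mathcal D_K(x^\alpha))=\mathcal D_K(x^\alpha)\otimes(1-et)^{\alpha_k-\alpha_{-k}}+\sum_{\ell\ge0}\sum_{j=0}^{\ell}(-1)^\ell A_jB_{\ell-j}\,h^{\langle\ell\rangle}\otimes(1-et)^{-\ell}\mathcal D_K\big(x^{\alpha+(\ell-j)\epsilon_k+j(\epsilon_0-\epsilon_{-k})}\big)t^\ell,$$ $$S(\mathcal D_K(x^\alpha))=-(1-et)^{\alpha_{-k}-\alpha_k}\sum_{\ell\ge0}\sum_{j=0}^{\ell}A_jB_{\ell-j}\,\mathcal D_K\big(x^{\alpha+(\ell-j)\epsilon_k+j(\epsilon_0-\epsilon_{-k})}\big)h_1^{\langle\ell\rangle}t^\ell,$$ $\varepsilon(\mathcal D_K(x^\alpha))=0$, where $A_j=\frac1{j!}\prod_{i=0}^{j-1}(i-\alpha_{-k})$ and $B_{\ell-j}=\frac1{(\ell-j)!}\prod_{i=0}^{\ell-j-1}(\|\alpha\|-\alpha_0+i)$ (empty products $=1$).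
   Context: Let $\mathbb F$ be a field of characteristic $0$ and $n\ge1$. Coordinates are indexed by $\{-n,\dots,-1,0,1,\dots,n\}$; $\epsilon_i\in\mathbb Z^{2n+1}$ is the $i$-th unit vector and, for $\alpha\in\mathbb Z^{2n+1}$, $x^\alpha=\prod_i x_i^{\alpha_i}$ in $\mathbb F[x_{-n}^{\pm1},\dots,x_n^{\pm1}]$. Define the derivation $\mathcal D_K(x^\alpha)=\big(2-\sum_{i=1}^n(\alpha_i+\alpha_{-i})\big)x^\alpha\frac{\partial}{\partial x_0}+\sum_{i=1}^n\Big[(\alpha_0x^{\alpha+\epsilon_i-\epsilon_0}+\alpha_{-i}x^{\alpha-\epsilon_{-i}})\frac{\partial}{\partial x_i}+(\alpha_0x^{\alpha+\epsilon_{-i}-\epsilon_0}-\alpha_ix^{\alpha-\epsilon_i})\frac{\partial}{\partial x_{-i}}\Big]$, extended linearly. The generalized Cartan type $K$ Lie algebra $\mathbf K$ is the Lie algebra of derivations (commutator bracket) with basis $\{\mathcal D_K(x^\alpha):\alpha\in\mathbb Z^{2n+1}\}$; explicitly $[\mathcal D_K(x^\alpha),\mathcal D_K(x^\beta)]=\mathcal D_K\Big(\big((2-\sum_{i=1}^n(\alpha_i+\alpha_{-i}))\beta_0-(2-\sum_{i=1}^n(\beta_i+\beta_{-i}))\alpha_0\big)x^{\alpha+\beta-\epsilon_0}+\sum_{i=1}^n(\alpha_{-i}\beta_i-\alpha_i\beta_{-i})x^{\alpha+\beta-\epsilon_i-\epsilon_{-i}}\Big)$. $\mathbf K^+_{\mathbb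 Z}$ is the $\mathbb Z$-span of $\mathcal D_K(x^\alpha)$, $\alpha\in\mathbb Z_{\ge0}^{2n+1}$. Also $|\alpha|=\sum_{i=-n}^n\alpha_i$ and $\|\alpha\|=|\alpha|+\alpha_0-2$. For an element $x$ of a unital algebra, a scalar $a$ and $m\ge0$: $x_a^{\langle m\rangle}=(x+a)(x+a+1)\cdots(x+a+m-1)$, $x_a^{[m]}=(x+a)(x+a-1)\cdots(x+a-m+1)$, $x^{\langle m\rangle}=x_0^{\langle m\rangle}$, $x^{[m]}=x_0^{[m]}$ (empty products $=1$). $U(L)[[t]]$ carries the standard Hopf structure $\Delta_0(y)=y\otimes1+1\otimes y$, $S_0(y)=-y$, $\varepsilon(y)=0$ for $y\in L$ (extended $t$-adically). Twisting by an invertible $\mathcal F$ means: same product and counit, $\Delta(a)=\mathcal F\Delta_0(a)\mathcal F^{-1}$, $S(a)=vS_0(a)v^{-1}$ with $v=m(\mathrm{Id}\otimes S_0)(\mathcal F)$. For $c\in\mathbb Z$, $(1-et)^c$ is the binomial power series in $t$. *)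

theory Defs
  imports Complex_Main "HOL-Library.Poly_Mapping"
begin

text \<open>Elements of the free associative algebra on generators of type 'g with
coefficients in 'a: finitely supported functions on words.\<close>

type_synonym ('g, 'a) falg = "'g list \<Rightarrow>\<^sub>0 'a"

definition fa_mult :: "('g,'a::comm_ring_1) falg \<Rightarrow> ('g,'a) falg \<Rightarrow> ('g,'a) falg" where
  "fa_mult p q = (\<Sum>u\<in>Poly_Mapping.keys p. \<Sum>v\<in>Poly_Mapping.keys q. Poly_Mapping.single (u @ v) (Poly_Mapping.lookup p u * Poly_Mapping.lookup q v))"

definition fa_const :: "'a::comm_ring_1 \<Rightarrow> ('g,'a) falg" where
  "fa_const c = Poly_Mapping.single [] c"

definition fa_smult :: "'a::comm_ring_1 \<Rightarrow> ('g,'a) falg \<Rightarrow> ('g,'a) falg" where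
  "fa_smult c p = fa_mult (fa_const c) p"

definition fa_gen :: "'g \<Rightarrow> ('g,'a::comm_ring_1) falg" where
  "fa_gen g = Poly_Mapping.single [g] 1"

definition fa_map :: "('g \<Rightarrow> 'h) \<Rightarrow> ('g,'a::comm_ring_1) falg \<Rightarrow> ('h,'a) falg" where
  "fa_map f p = (\<Sum>u\<in>Poly_Mapping.keys p. Poly_Mapping.single (map f u) (Poly_Mapping.lookup p u))"

text \<open>Standard antipode S0: the anti-automorphism with S0(y) = -y on generators.\<close>
definition fa_antipode :: "('g,'a::comm_ring_1) falg \<Rightarrow> ('g,'a) falg" where
  "fa_antipode p = (\<Sum>u\<in>Poly_Mapping.keys p. Poly_Mapping.single (rev u) ((-1) ^ length u * Poly_Mapping.lookup p u))"

text \<open>Standard counit: algebra map sending all generators to 0.\<close>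
definition fa_counit :: "('g,'a::comm_ring_1) falg \<Rightarrow> 'a" where
  "fa_counit p = Poly_Mapping.lookup p []"

primrec fa_pow :: "('g,'a::comm_ring_1) falg \<Rightarrow> nat \<Rightarrow> ('g,'a) falg" where
  "fa_pow x 0 = fa_const 1"
| "fa_pow x (Suc m) = fa_mult x (fa_pow x m)"

text \<open>x_a^<m> = (x+a)(x+a+1)...(x+a+m-1) and x_a^[m] = (x+a)(x+a-1)...(x+a-m+1).\<close>
definition fa_rising :: "('g,'a::comm_ring_1) falg \<Rightarrow> 'a \<Rightarrow> nat \<Rightarrow> ('g,'a) falg" where
  "fa_rising x a m = foldr (\<lambda>i acc. fa_mult (x + fa_const (a + of_nat i)) acc) [0..<m] (fa_const 1)"

definition fa_falling :: "('g,'a::comm_ring_1) falg \<Rightarrow> 'a \<Rightarrow> nat \<Rightarrow> ('g,'a) falg" where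
  "fa_falling x a m = foldr (\<lambda>i acc. fa_mult (x + fa_const (a - of_nat i)) acc) [0..<m] (fa_const 1)"

inductive_set two_sided_ideal :: "('g,'a::comm_ring_1) falg set \<Rightarrow> ('g,'a) falg set"
  for R :: "('g,'a) falg set" where
  gen: "r \<in> R \<Longrightarrow> r \<in> two_sided_ideal R"
| zero: "0 \<in> two_sided_ideal R"
| add: "x \<in> two_sided_ideal R \<Longrightarrow> y \<in> two_sided_ideal R \<Longrightarrow> x + y \<in> two_sided_ideal R"
| lmult: "x \<in> two_sided_ideal R \<Longrightarrow> fa_mult a x \<in> two_sided_ideal R"
| rmult: "x \<in> two_sided_ideal R \<Longrightarrow> fa_mult x a \<in> two_sided_ideal R"

type_synonym ('g, 'a) fps_falg = "nat \<Rightarrow> ('g,'a) falg"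

definition ps_mult :: "('g,'a::comm_ring_1) fps_falg \<Rightarrow> ('g,'a) fps_falg \<Rightarrow> ('g,'a) fps_falg" where
  "ps_mult f g d = (\<Sum>i\<le>d. fa_mult (f i) (g (d - i)))"

definition ps_const :: "('g,'a::comm_ring_1) falg \<Rightarrow> ('g,'a) fps_falg" where
  "ps_const x d = (if d = 0 then x else 0)"

text \<open>Inverse of a power series whose constant term is 1 (right inverse, which is
the two-sided inverse).\<close>
fun ps_inv :: "('g,'a::comm_ring_1) fps_falg \<Rightarrow> nat \<Rightarrow> ('g,'a) falg" where
  "ps_inv f m = (if m = 0 then fa_const 1
     else - (\<Sum>j\<in>{..<m}. fa_mult (f (m - j)) (ps_inv f j)))"

text \<open>Equality of power series in the quotient algebra (free algebra modulo I).\<close>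
definition ps_cong :: "('g,'a::comm_ring_1) falg set \<Rightarrow> ('g,'a) fps_falg \<Rightarrow> ('g,'a) fps_falg \<Rightarrow> bool" where
  "ps_cong I f g \<longleftrightarrow> (\<forall>d. f d - g d \<in> I)"

definition oneminus_pow :: "('g,'a::field_char_0) falg \<Rightarrow> 'a \<Rightarrow> ('g,'a) fps_falg" where
  "oneminus_pow x c m = fa_smult ((-1) ^ m * (c gchoose m)) (fa_pow x m)"

text \<open>Exponent vectors alpha in Z^(2n+1), indices -n..n, as functions int => int
vanishing outside [-n,n].\<close>
definition Kidx :: "nat \<Rightarrow> (int \<Rightarrow> int) set" where
  "Kidx n = {\<alpha>. \<forall>i. (i < - int n \<or> i > int n) \<longrightarrow> \<alpha> i = 0}"

definition eps :: "int \<Rightarrow> int \<Rightarrow> int" where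
  "eps i = (\<lambda>j. if j = i then 1 else 0)"

text \<open>The bracket [D_K(x^a), D_K(x^b)], as a linear combination of basis elements
(degree one elements of the free algebra).\<close>
definition Kbracket :: "nat \<Rightarrow> (int \<Rightarrow> int) \<Rightarrow> (int \<Rightarrow> int) \<Rightarrow> (int \<Rightarrow> int, 'a::comm_ring_1) falg" where
  "Kbracket n a b =
     fa_smult (of_int ((2 - (\<Sum>i\<in>{1..int n}. a i + a (-i))) * b 0
                      - (2 - (\<Sum>i\<in>{1..int n}. b i + b (-i))) * a 0))
              (fa_gen (\<lambda>j. a j + b j - eps 0 j))
   + (\<Sum>i\<in>{1..int n}. fa_smult (of_int (a (-i) * b i - a i * b (-i)))
              (fa_gen (\<lambda>j. a j + b j - eps i j - eps (-i) j)))"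

text \<open>Defining relations of U(K): xy - yx - [x,y] for basis elements x, y.\<close>
definition relU :: "nat \<Rightarrow> (int \<Rightarrow> int, 'a::comm_ring_1) falg set" where
  "relU n = {fa_mult (fa_gen a) (fa_gen b) - fa_mult (fa_gen b) (fa_gen a) - Kbracket n a b
             | a b. a \<in> Kidx n \<and> b \<in> Kidx n}"

definition IU :: "nat \<Rightarrow> (int \<Rightarrow> int, 'a::comm_ring_1) falg set" where
  "IU n = two_sided_ideal (relU n)"

text \<open>U(K) (x) U(K): free algebra on two copies (Inl / Inr) of the basis modulo the
relations of U(K) in each copy and commutation between the copies.\<close>
definition relUU :: "nat \<Rightarrow> ((int \<Rightarrow> int) + (int \<Rightarrow> int), 'a::comm_ring_1) falg set" where
  "relUU n = fa_map Inl ` relU n \<union> fa_map Inr ` relU n \<union>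
     {fa_mult (fa_gen (Inl a)) (fa_gen (Inr b)) - fa_mult (fa_gen (Inr b)) (fa_gen (Inl a))
       | a b. a \<in> Kidx n \<and> b \<in> Kidx n}"

definition IUU :: "nat \<Rightarrow> ((int \<Rightarrow> int) + (int \<Rightarrow> int), 'a::comm_ring_1) falg set" where
  "IUU n = two_sided_ideal (relUU n)"

definition tensor :: "('g,'a::comm_ring_1) falg \<Rightarrow> ('g,'a) falg \<Rightarrow> ('g + 'g,'a) falg" where
  "tensor x y = fa_mult (fa_map Inl x) (fa_map Inr y)"

text \<open>Standard coproduct Delta0: algebra map with y |-> y (x) 1 + 1 (x) y on generators.\<close>
definition fa_coprod0 :: "('g,'a::comm_ring_1) falg \<Rightarrow> ('g + 'g,'a) falg" where
  "fa_coprod0 p = (\<Sum>u\<in>Poly_Mapping.keys p. fa_smult (Poly_Mapping.lookup p u)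
      (foldr (\<lambda>g acc. fa_mult (fa_gen (Inl g) + fa_gen (Inr g)) acc) u (fa_const 1)))"

definition hK :: "int \<Rightarrow> (int \<Rightarrow> int, 'a::comm_ring_1) falg" where
  "hK k = fa_gen (\<lambda>j. eps k j + eps (-k) j)"

definition eK :: "int \<Rightarrow> (int \<Rightarrow> int, 'a::comm_ring_1) falg" where
  "eK k = fa_gen (\<lambda>j. eps k j + eps 0 j)"

text \<open>F = sum_r (-1)^r/r! h^[r] (x) e^r t^r; coefficient of t^r.\<close>
definition twistF :: "int \<Rightarrow> ((int \<Rightarrow> int) + (int \<Rightarrow> int), 'a::field_char_0) fps_falg" where
  "twistF k r = fa_smult ((-1) ^ r / fact r) (tensor (fa_falling (hK k) 0 r) (fa_pow (eK k) r))"

text \<open>v = m (Id (x) S0)(F).\<close>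
definition twistV :: "int \<Rightarrow> (int \<Rightarrow> int, 'a::field_char_0) fps_falg" where
  "twistV k r = fa_smult ((-1) ^ r / fact r) (fa_mult (fa_falling (hK k) 0 r) (fa_antipode (fa_pow (eK k) r)))"

definition twisted_coproduct :: "int \<Rightarrow> (int \<Rightarrow> int, 'a::field_char_0) falg
     \<Rightarrow> ((int \<Rightarrow> int) + (int \<Rightarrow> int), 'a) fps_falg" where
  "twisted_coproduct k x = ps_mult (ps_mult (twistF k) (ps_const (fa_coprod0 x))) (ps_inv (twistF k))"

definition twisted_antipode :: "int \<Rightarrow> (int \<Rightarrow> int, 'a::field_char_0) falg
     \<Rightarrow> (int \<Rightarrow> int, 'a) fps_falg" where
  "twisted_antipode k x = ps_mult (ps_mult (twistV k) (ps_const (fa_antipode x))) (ps_inv (twistV k))"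

definition knorm :: "nat \<Rightarrow> (int \<Rightarrow> int) \<Rightarrow> int" where
  "knorm n \<alpha> = (\<Sum>i\<in>{- int n..int n}. \<alpha> i) + \<alpha> 0 - 2"

definition Acoef :: "(int \<Rightarrow> int) \<Rightarrow> int \<Rightarrow> nat \<Rightarrow> 'a::field_char_0" where
  "Acoef \<alpha> k j = (\<Prod>i<j. of_nat i - of_int (\<alpha> (-k))) / fact j"

definition Bcoef :: "nat \<Rightarrow> (int \<Rightarrow> int) \<Rightarrow> nat \<Rightarrow> 'a::field_char_0" where
  "Bcoef n \<alpha> m = (\<Prod>i<m. of_int (knorm n \<alpha> - \<alpha> 0) + of_nat i) / fact m"

definition gam :: "(int \<Rightarrow> int) \<Rightarrow> int \<Rightarrow> nat \<Rightarrow> nat \<Rightarrow> int \<Rightarrow> int" where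
  "gam \<alpha> k l j = (\<lambda>i. \<alpha> i + int (l - j) * eps k i + int j * (eps 0 i - eps (-k) i))"

definition DeltaRHS :: "nat \<Rightarrow> int \<Rightarrow> (int \<Rightarrow> int) \<Rightarrow> ((int \<Rightarrow> int) + (int \<Rightarrow> int), 'a::field_char_0) fps_falg" where
  "DeltaRHS n k \<alpha> d =
     tensor (fa_gen \<alpha>) (oneminus_pow (eK k) (of_int (\<alpha> k - \<alpha> (-k))) d)
   + (\<Sum>l\<le>d. \<Sum>j\<le>l. fa_smult ((-1) ^ l * Acoef \<alpha> k j * Bcoef n \<alpha> (l - j))
        (tensor (fa_rising (hK k) 0 l)
                (fa_mult (oneminus_pow (eK k) (- of_nat l) (d - l)) (fa_gen (gam \<alpha> k l j)))))"

definition SRHS :: "nat \<Rightarrow> int \<Rightarrow> (int \<Rightarrow> int) \<Rightarrow> (int \<Rightarrow> int, 'a::field_char_0) fps_falg" where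
  "SRHS n k \<alpha> d =
     - (\<Sum>l\<le>d. \<Sum>j\<le>l. fa_smult (Acoef \<alpha> k j * Bcoef n \<alpha> (l - j))
        (fa_mult (oneminus_pow (eK k) (of_int (\<alpha> (-k) - \<alpha> k)) (d - l))
                 (fa_mult (fa_gen (gam \<alpha> k l j)) (fa_rising (hK k) 1 l))))"

end

theory Submission
  imports Defs "HOL-Computational_Algebra.Formal_Power_Series" "HOL-Computational_Algebra.Polynomial"
begin

(*
  Write h and e for the generators D_K(x^(eps_k + eps_-k)) and D_K(x^(eps_k + eps_0)).  In U(K),
  x^beta h = (h - (beta_k - beta_-k)) x^beta, in particular e h = (h - 1) e, and the elements
  Q_m = (ad e)^m x^alpha / m! are the sums  sum_j A_j B_(m-j) D_K(x^gamma)  of the theorem.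
  With H = h (x) 1 and E = 1 (x) e, which commute, the twist is the binomial series
  F = (1 - E t)^H, with inverse (1 - E t)^-H.  Moving a polynomial in h past a power of e, or past
  x^beta, only shifts its argument, so every identity between such series reduces, coefficient by
  coefficient, to Vandermonde's convolution for binomial coefficients.  Hence
  F (x (x) 1) F^-1 = x (x) (1 - e t)^(alpha_k - alpha_-k), while F (1 (x) x) F^-1 follows from the
  expansion  x e^d = sum_m (-1)^m (d choose m) m! e^(d-m) Q_m.  The antipode is treated in the same
  way, with v = (1 + e t)^h and its inverse (1 - e t)^h.
*)

section \<open>The free algebra as a ring\<close>

text \<open>Making lists a monoid under concatenation turns Poly_Mapping's convolution product
on \<open>'g list \<Rightarrow>\<^sub>0 'a\<close> into the product of the free algebra.\<close>

instantiation list :: (type) monoid_add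
begin
definition zero_list :: "'a list" where "zero_list = []"
definition plus_list :: "'a list \<Rightarrow> 'a list \<Rightarrow> 'a list" where "plus_list u v = u @ v"
instance by standard (auto simp: zero_list_def plus_list_def)
end

lemma zero_list_eq_Nil: "(0::'a list) = []"
  by (simp add: zero_list_def)

lemma single_Nil_one: "Poly_Mapping.single [] (1::'b::semiring_1) = 1"
  using single_one[where 'a="'a list"] by (simp add: zero_list_eq_Nil)

lemma single_Nil_of_nat: "Poly_Mapping.single [] (of_nat m::'b::semiring_1) = of_nat m"
  using single_of_nat[where 'a="'a list"] by (simp add: zero_list_eq_Nil)

lemma single_Nil_of_int: "Poly_Mapping.single [] (of_int m::'b::ring_1) = of_int m"
  using single_of_int[where 'a="'a list"] by (simp add: zero_list_eq_Nil)

lemma poly_mapping_sum_single_superset: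
  assumes "finite K" "Poly_Mapping.keys p \<subseteq> K"
  shows "(p::'k \<Rightarrow>\<^sub>0 'b::comm_monoid_add) = (\<Sum>u\<in>K. Poly_Mapping.single u (Poly_Mapping.lookup p u))"
proof (rule poly_mapping_eqI)
  fix k
  have "Poly_Mapping.lookup (\<Sum>u\<in>K. Poly_Mapping.single u (Poly_Mapping.lookup p u)) k
      = (\<Sum>u\<in>K. (Poly_Mapping.lookup p u when u = k))"
    by (simp add: lookup_sum lookup_single)
  also have "\<dots> = Poly_Mapping.lookup p k"
  proof (cases "k \<in> K")
    case True
    then show ?thesis using assms(1) by (simp add: sum.remove[of K k] when_def)
  next
    case False
    then have "k \<notin> Poly_Mapping.keys p" using assms by auto
    then show ?thesis using False by (auto simp: when_def in_keys_iff intro!: sum.neutral)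
  qed
  finally show "Poly_Mapping.lookup p k = Poly_Mapping.lookup (\<Sum>u\<in>K. Poly_Mapping.single u (Poly_Mapping.lookup p u)) k"
    by simp
qed

lemma poly_mapping_sum_single:
  "(p::'k \<Rightarrow>\<^sub>0 'b::comm_monoid_add) = (\<Sum>u\<in>Poly_Mapping.keys p. Poly_Mapping.single u (Poly_Mapping.lookup p u))"
  by (rule poly_mapping_sum_single_superset) auto

lemma fa_mult_eq_times: "fa_mult p q = p * q"
proof -
  have "p * q = (\<Sum>u\<in>Poly_Mapping.keys p. Poly_Mapping.single u (Poly_Mapping.lookup p u)) *
               (\<Sum>v\<in>Poly_Mapping.keys q. Poly_Mapping.single v (Poly_Mapping.lookup q v))"
    by (simp flip: poly_mapping_sum_single)
  also have "\<dots> = fa_mult p q"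
    by (simp add: fa_mult_def sum_distrib_left sum_distrib_right mult_single plus_list_def)
       (rule sum.swap)
  finally show ?thesis by simp
qed

lemma fa_const_1 [simp]: "fa_const 1 = 1"
  by (simp add: fa_const_def single_Nil_one)

lemma fa_const_0 [simp]: "fa_const 0 = 0"
  by (simp add: fa_const_def)

lemma fa_const_add: "fa_const (a + b) = fa_const a + fa_const b"
  by (simp add: fa_const_def single_add)

lemma fa_const_diff: "fa_const (a - b) = fa_const a - fa_const b"
  by (simp add: fa_const_def single_diff)

lemma fa_const_mult: "fa_const (a * b) = fa_const a * fa_const b"
  by (simp add: fa_const_def mult_single plus_list_def)

lemma fa_const_of_nat: "fa_const (of_nat m) = of_nat m"
  by (simp add: fa_const_def single_Nil_of_nat)

lemma fa_const_of_int: "fa_const (of_int m) = of_int m"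
  by (simp add: fa_const_def single_Nil_of_int)

lemma fa_const_commute: "fa_const c * p = p * fa_const c"
proof -
  have "fa_const c * p = fa_const c * (\<Sum>u\<in>Poly_Mapping.keys p. Poly_Mapping.single u (Poly_Mapping.lookup p u))"
    by (simp flip: poly_mapping_sum_single)
  also have "\<dots> = (\<Sum>u\<in>Poly_Mapping.keys p. Poly_Mapping.single u (Poly_Mapping.lookup p u)) * fa_const c"
    by (simp add: fa_const_def sum_distrib_left sum_distrib_right mult_single plus_list_def mult.commute)
  finally show ?thesis by (simp flip: poly_mapping_sum_single)
qed

lemma fa_const_mult_left_commute: "p * (fa_const c * q) = fa_const c * (p * q)"
  by (metis fa_const_commute mult.assoc)

lemma fa_smult_eq: "fa_smult c p = fa_const c * p"
  by (simp add: fa_smult_def fa_mult_eq_times)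

lemma fa_smult_mult_left: "fa_smult c x * y = fa_smult c (x * y)"
  by (simp add: fa_smult_eq mult.assoc)

lemma mult_fa_smult: "x * fa_smult c y = fa_smult c (x * y)"
  by (simp add: fa_smult_eq fa_const_mult_left_commute)

lemma fa_smult_fa_smult: "fa_smult a (fa_smult b x) = fa_smult (a * b) x"
  by (simp add: fa_smult_eq fa_const_mult mult.assoc)

lemma fa_smult_1 [simp]: "fa_smult 1 x = x"
  by (simp add: fa_smult_eq)

lemma fa_smult_0_left [simp]: "fa_smult 0 x = 0"
  by (simp add: fa_smult_eq)

lemma fa_smult_add_left: "fa_smult (a + b) x = fa_smult a x + fa_smult b x"
  by (simp add: fa_smult_eq fa_const_add distrib_right)

lemma fa_smult_add_right: "fa_smult c (x + y) = fa_smult c x + fa_smult c y"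
  by (simp add: fa_smult_eq distrib_left)

lemma fa_smult_diff_right: "fa_smult c (x - y) = fa_smult c x - fa_smult c y"
  by (simp add: fa_smult_eq right_diff_distrib)

lemma fa_smult_sum: "fa_smult c (sum f A) = (\<Sum>i\<in>A. fa_smult c (f i))"
  by (simp add: fa_smult_eq sum_distrib_left)

lemmas fa_smult_normalize = fa_smult_mult_left mult_fa_smult fa_smult_fa_smult fa_smult_sum

lemma fa_pow_eq_power: "fa_pow x m = x ^ m"
  by (induction m) (simp_all add: fa_mult_eq_times)

lemma fa_gen_power: "(fa_gen g :: ('g,'a::comm_ring_1) falg) ^ m = Poly_Mapping.single (replicate m g) 1"
  by (induction m) (simp_all add: fa_gen_def mult_single plus_list_def single_one[symmetric] zero_list_eq_Nil)

lemma fa_const_times_single: "fa_const c * Poly_Mapping.single u 1 = Poly_Mapping.single u (c::'a::comm_ring_1)"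
  by (simp add: fa_const_def mult_single plus_list_def)

lemma fa_antipode_gen: "fa_antipode (fa_gen g :: ('g,'a::comm_ring_1) falg) = - fa_gen g"
  by (simp add: fa_antipode_def fa_gen_def single_uminus)

lemma fa_antipode_gen_power:
  "fa_antipode (fa_gen g ^ r :: ('g,'a::comm_ring_1) falg) = fa_smult ((-1)^r) (fa_gen g ^ r)"
  by (simp add: fa_gen_power fa_antipode_def fa_const_times_single fa_smult_eq)

lemma fa_coprod0_gen: "fa_coprod0 (fa_gen g :: ('g,'a::comm_ring_1) falg) = fa_gen (Inl g) + fa_gen (Inr g)"
  by (simp add: fa_coprod0_def fa_gen_def fa_smult_eq fa_mult_eq_times fa_const_def single_Nil_one)

lemma fa_counit_gen: "fa_counit (fa_gen g :: ('g,'a::comm_ring_1) falg) = 0"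
  by (simp add: fa_counit_def fa_gen_def lookup_single)

lemma fa_map_superset:
  assumes "finite K" "Poly_Mapping.keys p \<subseteq> K"
  shows "fa_map f p = (\<Sum>u\<in>K. Poly_Mapping.single (map f u) (Poly_Mapping.lookup p u))"
  unfolding fa_map_def
  by (rule sum.mono_neutral_left) (use assms in \<open>auto simp: in_keys_iff\<close>)

lemma fa_map_add: "fa_map f (p + q) = fa_map f p + fa_map f q"
proof -
  let ?K = "Poly_Mapping.keys p \<union> Poly_Mapping.keys q"
  have k: "Poly_Mapping.keys (p+q) \<subseteq> ?K" by (rule keys_add)
  show ?thesis
    by (simp add: fa_map_superset[OF _ k] fa_map_superset[of ?K p] fa_map_superset[of ?K q]
        lookup_add single_add sum.distrib)
qed

lemma fa_map_0 [simp]: "fa_map f 0 = 0"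
  by (simp add: fa_map_def)

lemma fa_map_sum: "fa_map f (sum g A) = (\<Sum>x\<in>A. fa_map f (g x))"
  by (induction A rule: infinite_finite_induct) (simp_all add: fa_map_add)

lemma fa_map_single: "fa_map f (Poly_Mapping.single u c) = Poly_Mapping.single (map f u) c"
  by (simp add: fa_map_def)

lemma fa_map_diff: "fa_map f (p - q) = fa_map f p - fa_map f q"
proof -
  have "fa_map f (p - q) + fa_map f q = fa_map f p"
    by (simp flip: fa_map_add)
  then show ?thesis by (simp add: eq_diff_eq)
qed

lemma fa_map_mult: "fa_map f (p * q) = fa_map f p * fa_map f q"
proof -
  have "fa_map f (p * q) = fa_map f ((\<Sum>u\<in>Poly_Mapping.keys p. Poly_Mapping.single u (Poly_Mapping.lookup p u)) *
               (\<Sum>v\<in>Poly_Mapping.keys q. Poly_Mapping.single v (Poly_Mapping.lookup q v)))"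
    by (simp flip: poly_mapping_sum_single)
  also have "\<dots> = (\<Sum>u\<in>Poly_Mapping.keys p. Poly_Mapping.single (map f u) (Poly_Mapping.lookup p u)) *
               (\<Sum>v\<in>Poly_Mapping.keys q. Poly_Mapping.single (map f v) (Poly_Mapping.lookup q v))"
    by (simp add: sum_distrib_left sum_distrib_right mult_single plus_list_def fa_map_sum fa_map_single)
  also have "\<dots> = fa_map f p * fa_map f q" by (simp add: fa_map_def)
  finally show ?thesis .
qed

lemma fa_map_fa_const: "fa_map f (fa_const c) = fa_const c"
  by (simp add: fa_const_def fa_map_single)

lemma fa_map_of_nat: "fa_map f (of_nat m) = of_nat m"
  using fa_map_fa_const[of f "of_nat m"] by (simp add: fa_const_of_nat)

lemma fa_map_one [simp]: "fa_map f 1 = 1"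
  using fa_map_fa_const[of f 1] by simp

lemma fa_map_power: "fa_map f (p ^ m) = fa_map f p ^ m"
  by (induction m) (simp_all add: fa_map_mult)

lemma fa_map_fa_smult: "fa_map f (fa_smult c x) = fa_smult c (fa_map f x)"
  by (simp add: fa_smult_eq fa_map_mult fa_map_fa_const)

lemma fa_map_gen: "fa_map f (fa_gen g) = fa_gen (f g)"
  by (simp add: fa_gen_def fa_map_single)

section \<open>Polynomials evaluated in the free algebra\<close>

definition fa_eval :: "('g,'a::comm_ring_1) falg \<Rightarrow> 'a poly \<Rightarrow> ('g,'a) falg" where
  "fa_eval x p = foldr (\<lambda>a acc. fa_const a + x * acc) (coeffs p) 0"

lemma fa_eval_0 [simp]: "fa_eval x 0 = 0"
  by (simp add: fa_eval_def)

lemma fa_eval_pCons: "fa_eval x (pCons a p) = fa_const a + x * fa_eval x p"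
  by (cases "p = 0 \<and> a = 0") (auto simp: fa_eval_def cCons_def)

lemma fa_eval_const: "fa_eval x [:c:] = fa_const c"
  by (simp add: fa_eval_pCons)

lemma fa_eval_1 [simp]: "fa_eval x 1 = 1"
  by (simp add: one_pCons fa_eval_const)

lemma fa_eval_linear: "fa_eval x [:c, 1:] = fa_const c + x"
  by (simp add: fa_eval_pCons)

lemma fa_eval_add: "fa_eval x (p + q) = fa_eval x p + fa_eval x q"
  by (induction p q rule: poly_induct2) (simp_all add: fa_eval_pCons fa_const_add algebra_simps)

lemma fa_eval_smult: "fa_eval x (smult a p) = fa_smult a (fa_eval x p)"
  unfolding fa_smult_eq
proof (induction p)
  case (pCons b p)
  have "x * (fa_const a * fa_eval x p) = fa_const a * (x * fa_eval x p)"
    by (rule fa_const_mult_left_commute)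
  with pCons show ?case by (simp add: fa_eval_pCons fa_const_mult algebra_simps)
qed simp

lemma fa_eval_mult: "fa_eval x (p * q) = fa_eval x p * fa_eval x q"
  by (induction p) (simp_all add: fa_eval_pCons fa_eval_add fa_eval_smult fa_smult_eq algebra_simps)

lemma fa_eval_sum: "fa_eval x (sum f A) = (\<Sum>i\<in>A. fa_eval x (f i))"
  by (induction A rule: infinite_finite_induct) (simp_all add: fa_eval_add)

lemma fa_eval_prod_list: "fa_eval x (prod_list (map f l)) = prod_list (map (\<lambda>i. fa_eval x (f i)) l)"
  by (induction l) (simp_all add: fa_eval_mult)

lemma fa_map_fa_eval: "fa_map f (fa_eval x p) = fa_eval (fa_map f x) p"
  by (induction p) (simp_all add: fa_eval_pCons fa_map_add fa_map_mult fa_map_fa_const)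

lemma fa_eval_of_int_mult_right: "fa_eval x p * (of_int c * y) = fa_eval x (smult (of_int c) p) * y"
proof -
  have "fa_eval x p * (of_int c * y) = (fa_eval x p * of_int c) * y"
    by (simp add: mult.assoc)
  also have "fa_eval x p * of_int c = of_int c * fa_eval x p"
    by (rule mult_of_int_commute[symmetric])
  finally show ?thesis by (simp add: fa_eval_smult fa_smult_eq fa_const_of_int)
qed

definition falling_poly :: "'a::comm_ring_1 \<Rightarrow> nat \<Rightarrow> 'a poly" where
  "falling_poly a m = (\<Prod>i<m. [:a - of_nat i, 1:])"

definition rising_poly :: "'a::comm_ring_1 \<Rightarrow> nat \<Rightarrow> 'a poly" where
  "rising_poly a m = (\<Prod>i<m. [:a + of_nat i, 1:])"

lemma foldr_eq_prod_list: "foldr (\<lambda>i acc. f i * acc) l (1::'b::monoid_mult) = prod_list (map f l)"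
  by (induction l) simp_all

lemma fa_falling_eq_fa_eval: "fa_falling x a m = fa_eval x (falling_poly a m)"
proof -
  have "fa_falling x a m = foldr (\<lambda>i acc. fa_eval x [:a - of_nat i, 1:] * acc) [0..<m] 1"
    by (simp add: fa_falling_def fa_mult_eq_times fa_eval_linear add.commute)
  also have "\<dots> = fa_eval x (prod_list (map (\<lambda>i. [:a - of_nat i, 1:]) [0..<m]))"
    by (simp add: foldr_eq_prod_list fa_eval_prod_list)
  also have "\<dots> = fa_eval x (falling_poly a m)"
    by (simp add: falling_poly_def prod.distinct_set_conv_list[symmetric] atLeast0LessThan)
  finally show ?thesis .
qed

lemma fa_rising_eq_fa_eval: "fa_rising x a m = fa_eval x (rising_poly a m)"
proof -
  have "fa_rising x a m = foldr (\<lambda>i acc. fa_eval x [:a + of_nat i, 1:] * acc) [0..<m] 1"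
    by (simp add: fa_rising_def fa_mult_eq_times fa_eval_linear add.commute)
  also have "\<dots> = fa_eval x (prod_list (map (\<lambda>i. [:a + of_nat i, 1:]) [0..<m]))"
    by (simp add: foldr_eq_prod_list fa_eval_prod_list)
  also have "\<dots> = fa_eval x (rising_poly a m)"
    by (simp add: rising_poly_def prod.distinct_set_conv_list[symmetric] atLeast0LessThan)
  finally show ?thesis .
qed

lemma falling_poly_0 [simp]: "falling_poly a 0 = 1"
  by (simp add: falling_poly_def)

lemma poly_falling_poly: "poly (falling_poly a m) y = (\<Prod>i<m. y + a - of_nat i)"
  by (simp add: falling_poly_def poly_prod algebra_simps)

lemma poly_falling_poly_gchoose:
  "poly (falling_poly a m) y = fact m * ((y + a) gchoose m :: 'a::field_char_0)"
  by (simp add: poly_falling_poly gbinomial_prod_rev atLeast0LessThan)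

lemma poly_rising_poly: "poly (rising_poly a m) y = pochhammer (y + a) m"
  by (simp add: rising_poly_def pochhammer_prod poly_prod atLeast0LessThan algebra_simps)

lemma poly_rising_poly_gchoose:
  "poly (rising_poly a m) y = (-1)^m * fact m * ((- (y + a)) gchoose m :: 'a::field_char_0)"
  by (simp add: poly_rising_poly gbinomial_pochhammer add.commute)

lemma poly_eqI_char_0: "(\<And>y. poly p y = poly q y) \<Longrightarrow> p = (q::'a::field_char_0 poly)"
  by (metis poly_eq_poly_eq_iff ext)

lemma falling_poly_add:
  "falling_poly a s * falling_poly (a - of_nat s) r = falling_poly (a::'a::field_char_0) (s + r)"
proof (rule poly_eqI_char_0)
  fix y
  have "(\<Prod>i<s. y + a - of_nat i) * (\<Prod>i<r. y + (a - of_nat s) - of_nat i) = (\<Prod>i<s + r. y + a - of_nat i)"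
    by (induction r) (simp_all add: algebra_simps)
  then show "poly (falling_poly a s * falling_poly (a - of_nat s) r) y = poly (falling_poly a (s + r)) y"
    by (simp add: poly_falling_poly)
qed

lemma rising_poly_add: "rising_poly 0 m * rising_poly (of_nat m) r = rising_poly (0::'a::field_char_0) (m + r)"
  by (rule poly_eqI_char_0) (simp add: poly_rising_poly pochhammer_product[of m "m+r"])

lemma falling_poly_eq_rising_poly: "falling_poly (of_nat m) m = rising_poly (1::'a::field_char_0) m"
  by (rule poly_eqI_char_0)
     (simp add: poly_falling_poly_gchoose poly_rising_poly gbinomial_pochhammer')

lemma falling_poly_pcompose_shift: "pcompose (falling_poly a m) [:b, 1:] = falling_poly (a + b) (m::nat)"
  for a b :: "'a::field_char_0"
  by (rule poly_eqI_char_0) (simp add: poly_falling_poly poly_pcompose algebra_simps)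

section \<open>Congruences modulo a two-sided ideal\<close>

locale ring_ideal =
  fixes I :: "'r::ring_1 set"
  assumes zero_mem: "0 \<in> I"
    and add_mem: "a \<in> I \<Longrightarrow> b \<in> I \<Longrightarrow> a + b \<in> I"
    and mult_left_mem: "a \<in> I \<Longrightarrow> c * a \<in> I"
    and mult_right_mem: "a \<in> I \<Longrightarrow> a * c \<in> I"

definition cong_mod :: "'r::ring_1 set \<Rightarrow> 'r \<Rightarrow> 'r \<Rightarrow> bool" where
  "cong_mod I a b \<longleftrightarrow> a - b \<in> I"

context ring_ideal
begin

lemma uminus_mem: "a \<in> I \<Longrightarrow> - a \<in> I"
  using mult_left_mem[of a "-1"] by simp

lemma sum_mem: "(\<And>i. i \<in> A \<Longrightarrow> f i \<in> I) \<Longrightarrow> sum f A \<in> I"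
  by (induction A rule: infinite_finite_induct) (auto simp: zero_mem add_mem)

lemma cong_mod_refl [simp]: "cong_mod I a a"
  by (simp add: cong_mod_def zero_mem)

lemma cong_mod_sym: "cong_mod I a b \<Longrightarrow> cong_mod I b a"
  unfolding cong_mod_def using uminus_mem by fastforce

lemma cong_mod_trans [trans]: "cong_mod I a b \<Longrightarrow> cong_mod I b c \<Longrightarrow> cong_mod I a c"
  unfolding cong_mod_def using add_mem by fastforce

lemma cong_mod_add: "cong_mod I a b \<Longrightarrow> cong_mod I c d \<Longrightarrow> cong_mod I (a + c) (b + d)"
  unfolding cong_mod_def using add_mem by (fastforce simp: algebra_simps)

lemma cong_mod_uminus: "cong_mod I a b \<Longrightarrow> cong_mod I (- a) (- b)"
  unfolding cong_mod_def using uminus_mem by (fastforce simp: algebra_simps)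

lemma cong_mod_diff: "cong_mod I a b \<Longrightarrow> cong_mod I c d \<Longrightarrow> cong_mod I (a - c) (b - d)"
  using cong_mod_add[of a b "-c" "-d"] cong_mod_uminus by simp

lemma cong_mod_mult: "cong_mod I a b \<Longrightarrow> cong_mod I c d \<Longrightarrow> cong_mod I (a * c) (b * d)"
proof -
  assume "cong_mod I a b" "cong_mod I c d"
  then have "(a - b) * c + b * (c - d) \<in> I"
    unfolding cong_mod_def using add_mem mult_left_mem mult_right_mem by blast
  then show ?thesis by (simp add: cong_mod_def algebra_simps)
qed

lemma cong_mod_mult_left: "cong_mod I a b \<Longrightarrow> cong_mod I (c * a) (c * b)"
  by (simp add: cong_mod_mult)

lemma cong_mod_mult_right: "cong_mod I a b \<Longrightarrow> cong_mod I (a * c) (b * c)"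
  by (simp add: cong_mod_mult)

lemma cong_mod_sum: "(\<And>i. i \<in> A \<Longrightarrow> cong_mod I (f i) (g i)) \<Longrightarrow> cong_mod I (sum f A) (sum g A)"
  by (induction A rule: infinite_finite_induct) (auto simp: cong_mod_add)

lemma cong_mod_power_commute: "cong_mod I (x * y) (y * x) \<Longrightarrow> cong_mod I (x ^ m * y) (y * x ^ m)"
proof (induction m)
  case (Suc m)
  have "x ^ Suc m * y = x * (x ^ m * y)" by (simp add: mult.assoc)
  also have "cong_mod I \<dots> (x * (y * x ^ m))" using Suc by (simp add: cong_mod_mult_left)
  also have "x * (y * x ^ m) = (x * y) * x ^ m" by (simp add: mult.assoc)
  also have "cong_mod I \<dots> ((y * x) * x ^ m)" using Suc.prems by (simp add: cong_mod_mult_right)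
  also have "(y * x) * x ^ m = y * x ^ Suc m" by (simp add: mult.assoc power_commutes)
  finally show ?case .
qed simp

lemma cong_mod_conj_inverse:
  assumes "F * Fi = 1" and "cong_mod I (F * A) (B * F)"
  shows "cong_mod I (F * A * Fi) B"
proof -
  have "cong_mod I (F * A * Fi) (B * F * Fi)"
    using assms(2) by (rule cong_mod_mult_right)
  then show ?thesis by (simp add: mult.assoc assms(1))
qed

lemma cong_mod_mult_swap_inverse:
  assumes WV: "cong_mod I (W * V) 1" and Vi: "V * Vi = 1"
    and XW: "cong_mod I (X * W) (W * Y)"
  shows "cong_mod I (V * X) (Y * V)"
proof -
  have "W = (W * V) * Vi" by (simp add: mult.assoc Vi)
  also have "cong_mod I \<dots> (1 * Vi)" using WV by (rule cong_mod_mult_right)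
  finally have "cong_mod I (V * W) (V * Vi)" by (simp add: cong_mod_mult_left)
  then have VW: "cong_mod I (V * W) 1" by (simp add: Vi)
  have "V * X = V * X * 1" by simp
  also have "cong_mod I \<dots> (V * X * (W * V))"
    by (intro cong_mod_mult_left cong_mod_sym[OF WV])
  also have "\<dots> = V * (X * W) * V" by (simp add: mult.assoc)
  also have "cong_mod I \<dots> (V * (W * Y) * V)"
    by (intro cong_mod_mult_left cong_mod_mult_right XW)
  also have "\<dots> = (V * W) * (Y * V)" by (simp add: mult.assoc)
  also have "cong_mod I \<dots> (1 * (Y * V))" by (intro cong_mod_mult_right VW)
  finally show ?thesis by simp
qed

end

definition reorder_coeff :: "nat \<Rightarrow> nat \<Rightarrow> nat \<Rightarrow> int" where
  "reorder_coeff d l m = (-1)^m * int (d choose m) * int (pochhammer (Suc l) m)"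

lemma reorder_coeff_Suc_Suc:
  "reorder_coeff (Suc d) l (Suc m) = reorder_coeff d l (Suc m) - int (Suc l) * reorder_coeff d (Suc l) m"
  by (simp add: reorder_coeff_def pochhammer_rec algebra_simps)

lemma reorder_sum_Suc:
  fixes e :: "'r::ring_1" and Q :: "nat \<Rightarrow> 'r"
  shows "e * (\<Sum>m\<le>d. of_int (reorder_coeff d l m) * (e ^ (d - m) * Q (l + m)))
      - of_nat (Suc l) * (\<Sum>m\<le>d. of_int (reorder_coeff d (Suc l) m) * (e ^ (d - m) * Q (Suc l + m)))
    = (\<Sum>m\<le>Suc d. of_int (reorder_coeff (Suc d) l m) * (e ^ (Suc d - m) * Q (l + m)))"
proof -
  define X where "X m = e ^ (Suc d - m) * Q (l + m)" for m
  have "e * (\<Sum>m\<le>d. of_int (reorder_coeff d l m) * (e ^ (d - m) * Q (l + m)))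
      = (\<Sum>m\<le>d. of_int (reorder_coeff d l m) * X m)"
    unfolding sum_distrib_left X_def
    by (intro sum.cong refl) (simp add: Suc_diff_le mult_of_int_commute mult.assoc)
  also have "\<dots> = (\<Sum>m\<le>Suc d. of_int (reorder_coeff d l m) * X m)"
    by (simp add: reorder_coeff_def binomial_eq_0)
  also have "\<dots> = of_int (reorder_coeff (Suc d) l 0) * X 0
      + (\<Sum>m\<le>d. of_int (reorder_coeff d l (Suc m)) * X (Suc m))"
    by (subst sum.atMost_Suc_shift) (simp add: reorder_coeff_def)
  finally have first: "e * (\<Sum>m\<le>d. of_int (reorder_coeff d l m) * (e ^ (d - m) * Q (l + m)))
      = of_int (reorder_coeff (Suc d) l 0) * X 0 + (\<Sum>m\<le>d. of_int (reorder_coeff d l (Suc m)) * X (Suc m))" .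
  have second: "of_nat (Suc l) * (\<Sum>m\<le>d. of_int (reorder_coeff d (Suc l) m) * (e ^ (d - m) * Q (Suc l + m)))
      = (\<Sum>m\<le>d. of_int (int (Suc l) * reorder_coeff d (Suc l) m) * X (Suc m))"
    unfolding sum_distrib_left X_def by (intro sum.cong refl) (simp add: algebra_simps)
  have "(\<Sum>m\<le>Suc d. of_int (reorder_coeff (Suc d) l m) * (e ^ (Suc d - m) * Q (l + m)))
      = of_int (reorder_coeff (Suc d) l 0) * X 0
        + (\<Sum>m\<le>d. of_int (reorder_coeff (Suc d) l (Suc m)) * X (Suc m))"
    unfolding X_def by (rule sum.atMost_Suc_shift)
  also have "\<dots> = of_int (reorder_coeff (Suc d) l 0) * X 0
        + (\<Sum>m\<le>d. of_int (reorder_coeff d l (Suc m)) * X (Suc m))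
        - (\<Sum>m\<le>d. of_int (int (Suc l) * reorder_coeff d (Suc l) m) * X (Suc m))"
    by (simp add: reorder_coeff_Suc_Suc sum_subtractf algebra_simps del: of_nat_Suc)
  finally show ?thesis
    unfolding first second by simp
qed

text \<open>When \<open>[e, Q m] = (m + 1) Q (m + 1)\<close>, as for \<open>Q m = (ad e)^m x / m!\<close>, moving \<open>Q l\<close> to the right
of \<open>e^d\<close> produces the higher \<open>Q (l + m)\<close>.\<close>

lemma (in ring_ideal) cong_mod_mult_power_reorder:
  fixes Q :: "nat \<Rightarrow> 'r" and e :: 'r
  assumes Q: "\<And>m. cong_mod I (Q m * e) (e * Q m - of_nat (Suc m) * Q (Suc m))"
  shows "cong_mod I (Q l * e ^ d) (\<Sum>m\<le>d. of_int (reorder_coeff d l m) * (e ^ (d - m) * Q (l + m)))"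
proof (induction d arbitrary: l)
  case 0 then show ?case by (simp add: reorder_coeff_def)
next
  case (Suc d)
  have "Q l * e ^ Suc d = (Q l * e) * e ^ d" by (simp add: mult.assoc)
  also have "cong_mod I \<dots> ((e * Q l - of_nat (Suc l) * Q (Suc l)) * e ^ d)"
    using Q by (rule cong_mod_mult_right)
  also have "\<dots> = e * (Q l * e ^ d) - of_nat (Suc l) * (Q (Suc l) * e ^ d)"
    by (simp add: algebra_simps)
  also have "cong_mod I \<dots> (e * (\<Sum>m\<le>d. of_int (reorder_coeff d l m) * (e ^ (d - m) * Q (l + m)))
      - of_nat (Suc l) * (\<Sum>m\<le>d. of_int (reorder_coeff d (Suc l) m) * (e ^ (d - m) * Q (Suc l + m))))"
    by (intro cong_mod_diff cong_mod_mult_left Suc.IH)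
  also have "\<dots> = (\<Sum>m\<le>Suc d. of_int (reorder_coeff (Suc d) l m) * (e ^ (Suc d - m) * Q (l + m)))"
    by (rule reorder_sum_Suc)
  finally show ?case .
qed

section \<open>Moving polynomials past elements that shift them\<close>

locale falg_ideal = ring_ideal I for I :: "('g, 'a::comm_ring_1) falg set"
begin

lemma fa_eval_mult_shift:
  assumes "cong_mod I (x * y) (y * (x + fa_const b))"
  shows "cong_mod I (fa_eval x p * y) (y * fa_eval x (pcompose p [:b, 1:]))"
proof (induction p)
  case (pCons a p)
  let ?q = "fa_eval x (pcompose p [:b, 1:])"
  have "fa_eval x (pCons a p) * y = fa_const a * y + x * (fa_eval x p * y)"
    by (simp add: fa_eval_pCons algebra_simps)
  also have "cong_mod I \<dots> (fa_const a * y + (x * y) * ?q)"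
    using pCons by (simp add: cong_mod_add cong_mod_mult_left mult.assoc)
  also have "cong_mod I \<dots> (fa_const a * y + (y * (x + fa_const b)) * ?q)"
    using assms by (intro cong_mod_add cong_mod_mult_right) simp_all
  also have "fa_const a * y + (y * (x + fa_const b)) * ?q = y * fa_eval x (pcompose (pCons a p) [:b, 1:])"
    by (simp only: pcompose_pCons fa_eval_add fa_eval_const fa_eval_mult fa_eval_linear)
       (simp add: algebra_simps fa_const_commute[of a y])
  finally show ?case .
qed (simp add: pcompose_0)

lemma mult_fa_eval_shift:
  assumes "cong_mod I (y * x) ((x + fa_const b) * y)"
  shows "cong_mod I (y * fa_eval x p) (fa_eval x (pcompose p [:b, 1:]) * y)"
proof (induction p)
  case (pCons a p)
  let ?q = "fa_eval x (pcompose p [:b, 1:])"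
  have "y * fa_eval x (pCons a p) = y * fa_const a + (y * x) * fa_eval x p"
    by (simp add: fa_eval_pCons algebra_simps)
  also have "cong_mod I \<dots> (y * fa_const a + (x + fa_const b) * (y * fa_eval x p))"
    using assms by (simp add: cong_mod_add cong_mod_mult_right flip: mult.assoc)
  also have "cong_mod I \<dots> (y * fa_const a + (x + fa_const b) * (?q * y))"
    using pCons by (intro cong_mod_add cong_mod_mult_left) simp_all
  also have "y * fa_const a + (x + fa_const b) * (?q * y) = fa_eval x (pcompose (pCons a p) [:b, 1:]) * y"
    by (simp only: pcompose_pCons fa_eval_add fa_eval_const fa_eval_mult fa_eval_linear)
       (simp add: algebra_simps fa_const_commute[of a y])
  finally show ?case .
qed (simp add: pcompose_0)

lemma power_mult_fa_eval_shift:
  assumes "cong_mod I (e * h) ((h + fa_const b) * e)"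
  shows "cong_mod I (e ^ n * fa_eval h p) (fa_eval h (pcompose p [:of_nat n * b, 1:]) * e ^ n)"
proof (induction n arbitrary: p)
  case (Suc n)
  have "e ^ Suc n * fa_eval h p = e ^ n * (e * fa_eval h p)"
    by (simp add: mult.assoc power_Suc2 del: power_Suc)
  also have "cong_mod I \<dots> (e ^ n * (fa_eval h (pcompose p [:b, 1:]) * e))"
    by (rule cong_mod_mult_left, rule mult_fa_eval_shift[OF assms])
  also have "\<dots> = (e ^ n * fa_eval h (pcompose p [:b, 1:])) * e"
    by (simp add: mult.assoc)
  also have "cong_mod I \<dots> ((fa_eval h (pcompose (pcompose p [:b, 1:]) [:of_nat n * b, 1:]) * e ^ n) * e)"
    by (rule cong_mod_mult_right, rule Suc.IH)
  also have "\<dots> = fa_eval h (pcompose p [:of_nat (Suc n) * b, 1:]) * e ^ Suc n"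
    by (simp add: pcompose_assoc[symmetric] pcompose_pCons mult.assoc power_Suc2[symmetric] algebra_simps)
  finally show ?case .
qed simp

lemma fa_eval_power_mult:
  assumes "cong_mod I (e * h) ((h + fa_const b) * e)"
  shows "cong_mod I ((fa_eval h p * e ^ n) * (fa_eval h q * e ^ m))
    (fa_eval h (p * pcompose q [:of_nat n * b, 1:]) * e ^ (n + m))"
proof -
  have "(fa_eval h p * e ^ n) * (fa_eval h q * e ^ m) = fa_eval h p * (e ^ n * fa_eval h q) * e ^ m"
    by (simp add: mult.assoc)
  also have "cong_mod I \<dots> (fa_eval h p * (fa_eval h (pcompose q [:of_nat n * b, 1:]) * e ^ n) * e ^ m)"
    by (intro cong_mod_mult_right cong_mod_mult_left power_mult_fa_eval_shift[OF assms])
  also have "\<dots> = fa_eval h (p * pcompose q [:of_nat n * b, 1:]) * e ^ (n + m)"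
    by (simp add: fa_eval_mult mult.assoc power_add)
  finally show ?thesis .
qed

end

section \<open>Power series over the free algebra\<close>

definition fps_ideal :: "'r::ring_1 set \<Rightarrow> 'r fps set" where
  "fps_ideal I = {f. \<forall>n. fps_nth f n \<in> I}"

lemma cong_mod_fps_ideal_iff:
  "cong_mod (fps_ideal I) f g \<longleftrightarrow> (\<forall>n. cong_mod I (fps_nth f n) (fps_nth g n))"
  by (simp add: cong_mod_def fps_ideal_def)

lemma ps_cong_fps_nth: "ps_cong I (fps_nth f) (fps_nth g) \<longleftrightarrow> cong_mod (fps_ideal I) f g"
  unfolding ps_cong_def cong_mod_fps_ideal_iff by (simp add: cong_mod_def)

lemma (in ring_ideal) ring_ideal_fps_ideal: "ring_ideal (fps_ideal I)"
proof
  show "c * a \<in> fps_ideal I" if "a \<in> fps_ideal I" for a c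
    using that by (auto simp: fps_ideal_def fps_mult_nth intro!: sum_mem mult_left_mem)
  show "a * c \<in> fps_ideal I" if "a \<in> fps_ideal I" for a c
    using that by (auto simp: fps_ideal_def fps_mult_nth intro!: sum_mem mult_right_mem)
qed (auto simp: fps_ideal_def zero_mem add_mem)

lemma ps_mult_eq: "ps_mult f g = fps_nth (Abs_fps f * Abs_fps g)"
  by (rule ext) (simp add: ps_mult_def fps_mult_nth atLeast0AtMost fa_mult_eq_times)

lemma ps_const_eq: "ps_const x = fps_nth (fps_const x)"
  by (rule ext) (simp add: ps_const_def fps_const_def)

lemma Abs_fps_mult_ps_inv:
  assumes "f 0 = (1 :: ('g,'a::comm_ring_1) falg)"
  shows "Abs_fps f * Abs_fps (ps_inv f) = 1"
proof (rule fps_ext)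
  fix m
  show "fps_nth (Abs_fps f * Abs_fps (ps_inv f)) m = fps_nth 1 m"
  proof (cases m)
    case 0 then show ?thesis using assms by (simp add: fa_const_def single_Nil_one)
  next
    case (Suc k)
    have "fps_nth (Abs_fps f * Abs_fps (ps_inv f)) m = (\<Sum>i\<le>m. f i * ps_inv f (m - i))"
      by (simp add: fps_mult_nth atLeast0AtMost del: ps_inv.simps)
    also have "\<dots> = f 0 * ps_inv f m + (\<Sum>i<m. f (Suc i) * ps_inv f (m - Suc i))"
      using Suc by (simp only: sum.atMost_Suc_shift) (simp add: lessThan_Suc_atMost del: ps_inv.simps)
    also have "(\<Sum>i<m. f (Suc i) * ps_inv f (m - Suc i)) = (\<Sum>j<m. f (m - j) * ps_inv f j)"
      by (rule sum.reindex_bij_witness[where i="\<lambda>j. m - Suc j" and j="\<lambda>i. m - Suc i"])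
         (auto simp del: ps_inv.simps)
    also have "ps_inv f m = - (\<Sum>j<m. f (m - j) * ps_inv f j)"
      using Suc by (simp add: fa_mult_eq_times del: ps_inv.simps) (subst ps_inv.simps, simp add: fa_mult_eq_times)
    finally show ?thesis using Suc assms by (simp del: ps_inv.simps)
  qed
qed

text \<open>The series \<open>\<Sum>\<^sub>m t\<^sup>m a\<^sub>m\<close>.\<close>

definition fps_shifted_sum :: "(nat \<Rightarrow> 'r::ring_1 fps) \<Rightarrow> 'r fps" where
  "fps_shifted_sum a = Abs_fps (\<lambda>d. \<Sum>m\<le>d. fps_nth (a m) (d - m))"

lemma sum_triangle_swap:
  "(\<Sum>i\<le>d. \<Sum>m\<le>d - i. g i m) = (\<Sum>m\<le>(d::nat). \<Sum>i\<le>d - m. g i m)"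
proof -
  have "(\<Sum>i\<le>d. \<Sum>m\<le>d - i. g i m) = (\<Sum>i\<le>d. \<Sum>m\<in>{m\<in>{..d}. i + m \<le> d}. g i m)"
    by (rule sum.cong) (auto intro!: sum.cong)
  also have "\<dots> = (\<Sum>m\<le>d. \<Sum>i\<in>{i\<in>{..d}. i + m \<le> d}. g i m)"
    by (rule sum.swap_restrict) auto
  also have "\<dots> = (\<Sum>m\<le>(d::nat). \<Sum>i\<le>d - m. g i m)"
    by (rule sum.cong) (auto intro!: sum.cong)
  finally show ?thesis .
qed

lemma mult_fps_shifted_sum: "f * fps_shifted_sum a = fps_shifted_sum (\<lambda>m. f * a m)"
proof (rule fps_ext)
  fix d
  have "fps_nth (f * fps_shifted_sum a) d = (\<Sum>i\<le>d. \<Sum>m\<le>d - i. fps_nth f i * fps_nth (a m) (d - i - m))"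
    by (simp add: fps_mult_nth fps_shifted_sum_def atLeast0AtMost sum_distrib_left)
  also have "\<dots> = (\<Sum>m\<le>d. \<Sum>i\<le>d - m. fps_nth f i * fps_nth (a m) (d - i - m))"
    by (rule sum_triangle_swap)
  also have "\<dots> = fps_nth (fps_shifted_sum (\<lambda>m. f * a m)) d"
    by (simp add: fps_mult_nth fps_shifted_sum_def atLeast0AtMost diff_commute add.commute)
  finally show "fps_nth (f * fps_shifted_sum a) d = fps_nth (fps_shifted_sum (\<lambda>m. f * a m)) d" .
qed

lemma (in ring_ideal) cong_mod_fps_shifted_sum:
  "(\<And>m. cong_mod (fps_ideal I) (a m) (b m)) \<Longrightarrow> cong_mod (fps_ideal I) (fps_shifted_sum a) (fps_shifted_sum b)"
  unfolding cong_mod_fps_ideal_iff fps_shifted_sum_def by (auto intro!: cong_mod_sum)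

sublocale falg_ideal \<subseteq> fps: ring_ideal "fps_ideal I"
  by (rule ring_ideal_fps_ideal)

lemma fps_mult_nth_rev: "fps_nth (f * g) n = (\<Sum>i\<le>n. fps_nth f (n - i) * fps_nth g i)"
proof -
  have "fps_nth (f * g) n = (\<Sum>i\<le>n. fps_nth f i * fps_nth g (n - i))"
    by (simp add: fps_mult_nth atLeast0AtMost)
  also have "\<dots> = (\<Sum>i\<le>n. fps_nth f (n - i) * fps_nth g i)"
    by (rule sum.reindex_bij_witness[where i="\<lambda>i. n - i" and j="\<lambda>i. n - i"]) auto
  finally show ?thesis .
qed

section \<open>Binomial identities for falling and rising factorial polynomials\<close>

lemma minus_one_power_split: "i \<le> d \<Longrightarrow> (-1::'a::comm_ring_1) ^ i * (-1) ^ (d - i) = (-1) ^ d"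
  by (simp add: power_add[symmetric])

lemma minus_one_power_square: "(-1::'a::comm_ring_1) ^ r * (-1) ^ r = 1"
  by (simp flip: power_mult_distrib)

lemma gbinomial_Vandermonde_signed:
  "(\<Sum>i\<le>d. ((-1)^i * (a gchoose i)) * ((-1)^(d - i) * (b gchoose (d - i))))
    = (-1)^d * ((a + b) gchoose d :: 'a::field_char_0)"
proof -
  have "(\<Sum>i\<le>d. ((-1)^i * (a gchoose i)) * ((-1)^(d - i) * (b gchoose (d - i))))
      = (-1)^d * (\<Sum>i\<le>d. (a gchoose i) * (b gchoose (d - i)))"
    unfolding sum_distrib_left
    by (intro sum.cong refl) (simp add: minus_one_power_split[symmetric] algebra_simps)
  then show ?thesis
    using gbinomial_Vandermonde[of a b d] by (simp add: atLeast0AtMost)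
qed

lemma falling_poly_pcompose_Vandermonde:
  "pcompose (smult ((-1)^d / fact d) (falling_poly 0 d)) [:c, 1:]
    = (\<Sum>i\<le>d. [:(-1)^i * (c gchoose i):] * smult ((-1)^(d - i) / fact (d - i)) (falling_poly 0 (d - i))
        :: 'a::field_char_0 poly)"
  (is "?L = ?R")
proof (rule poly_eqI_char_0)
  fix y
  have "poly ?R y = (\<Sum>i\<le>d. ((-1)^i * (c gchoose i)) * ((-1)^(d - i) * (y gchoose (d - i))))"
    by (simp add: poly_sum poly_falling_poly_gchoose mult_ac)
  also have "\<dots> = (-1)^d * ((c + y) gchoose d)"
    by (rule gbinomial_Vandermonde_signed)
  also have "\<dots> = poly ?L y"
    by (simp add: poly_pcompose poly_falling_poly_gchoose algebra_simps)
  finally show "poly ?L y = poly ?R y" by simp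
qed

lemma rising_falling_poly_convolution:
  "(\<Sum>s\<le>d. smult (1 / fact s) (rising_poly 0 s) * smult ((-1)^(d - s) / fact (d - s)) (falling_poly 0 (d - s)))
    = (if d = 0 then 1 else (0::'a::field_char_0 poly))"
  (is "?L = ?R")
proof (rule poly_eqI_char_0)
  fix y :: 'a
  have "poly ?L y = (\<Sum>s\<le>d. ((-1)^s * ((-y) gchoose s)) * ((-1)^(d - s) * (y gchoose (d - s))))"
    by (simp add: poly_sum poly_falling_poly_gchoose poly_rising_poly_gchoose mult_ac)
  also have "\<dots> = (-1)^d * ((-y + y) gchoose d)"
    by (rule gbinomial_Vandermonde_signed)
  finally show "poly ?L y = poly ?R y"
    by (simp add: gbinomial_0_left)
qed

lemma falling_rising_poly_convolution:
  "(\<Sum>i\<le>u. smult ((-1)^i / fact i) (falling_poly 0 i) * smult (1 / fact (u - i)) (rising_poly (of_nat m) (u - i)))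
    = [:(-1)^u * ((- of_nat m) gchoose u) :: 'a::field_char_0:]"
  (is "?L = ?R")
proof (rule poly_eqI_char_0)
  fix y :: 'a
  have "poly ?L y = (\<Sum>i\<le>u. ((-1)^i * (y gchoose i)) * ((-1)^(u - i) * ((- (y + of_nat m)) gchoose (u - i))))"
    by (simp add: poly_sum poly_falling_poly_gchoose poly_rising_poly_gchoose mult_ac)
  also have "\<dots> = (-1)^u * ((y + - (y + of_nat m)) gchoose u)"
    by (rule gbinomial_Vandermonde_signed)
  finally show "poly ?L y = poly ?R y"
    by simp
qed

lemma falling_poly_gchoose_convolution:
  "(\<Sum>s\<le>u. smult ((-1)^s / fact s) (falling_poly 0 s) * [:(-1)^(u - s) * (c gchoose (u - s)):])
    = smult ((-1)^u / fact u) (falling_poly c u :: 'a::field_char_0 poly)"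
  (is "?L = ?R")
proof (rule poly_eqI_char_0)
  fix y :: 'a
  have "poly ?L y = (\<Sum>s\<le>u. ((-1)^s * (y gchoose s)) * ((-1)^(u - s) * (c gchoose (u - s))))"
    by (simp add: poly_sum poly_falling_poly_gchoose mult_ac)
  also have "\<dots> = (-1)^u * ((y + c) gchoose u)"
    by (rule gbinomial_Vandermonde_signed)
  finally show "poly ?L y = poly ?R y"
    by (simp add: poly_falling_poly_gchoose)
qed

lemma alternating_inverse_fact_sum:
  "(\<Sum>s\<le>d. (-1)^s / (fact s * fact (d - s))) = (if d = 0 then 1 else (0::'a::field_char_0))"
proof (cases "d = 0")
  case False
  have "(\<Sum>s\<le>d. (-1)^s / (fact s * fact (d - s))) = (\<Sum>s\<le>d. (-1)^s * of_nat (d choose s)) / (fact d :: 'a)"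
    unfolding sum_divide_distrib
  proof (intro sum.cong refl)
    fix s assume "s \<in> {..d}"
    then have "fact s * fact (d - s) * of_nat (d choose s) = (fact d :: 'a)"
      using binomial_fact_lemma[of s d] by (metis of_nat_fact of_nat_mult atMost_iff)
    then show "(-1)^s / (fact s * fact (d - s)) = (-1)^s * of_nat (d choose s) / (fact d :: 'a)"
      by (auto simp: field_simps)
  qed
  also have "\<dots> = 0"
    using False by (simp add: choose_alternating_sum)
  finally show ?thesis using False by simp
qed simp

lemma falling_poly_shifted_convolution:
  "(\<Sum>s\<le>d. smult ((-1)^s / fact s) (falling_poly 0 s)
      * pcompose (smult (1 / fact (d - s)) (falling_poly 0 (d - s))) [:- of_nat s, 1:])
    = (if d = 0 then 1 else (0::'a::field_char_0 poly))"
proof -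
  have "smult ((-1)^s / fact s) (falling_poly 0 s) * pcompose (smult (1 / fact (d - s)) (falling_poly 0 (d - s))) [:- of_nat s, 1:]
      = smult ((-1)^s / (fact s * fact (d - s))) (falling_poly (0::'a) d)" if "s \<le> d" for s
  proof -
    have "falling_poly 0 s * falling_poly (0 - of_nat s) (d - s) = falling_poly (0::'a) d"
      using falling_poly_add[of 0 s "d - s"] that by simp
    then show ?thesis
      by (simp add: pcompose_smult falling_poly_pcompose_shift mult.commute)
  qed
  then have "(\<Sum>s\<le>d. smult ((-1)^s / fact s) (falling_poly 0 s)
      * pcompose (smult (1 / fact (d - s)) (falling_poly 0 (d - s))) [:- of_nat s, 1:])
      = smult (\<Sum>s\<le>d. (-1)^s / (fact s * fact (d - s))) (falling_poly (0::'a) d)"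
    by (simp add: smult_sum)
  then show ?thesis
    by (simp add: alternating_inverse_fact_sum)
qed

lemma reorder_coeff_0_div_fact:
  assumes "m \<le> d"
  shows "of_int (reorder_coeff d 0 m) / fact d = ((-1)^m / fact (d - m) :: 'a::field_char_0)"
proof -
  have "fact m * fact (d - m) * of_nat (d choose m) = (fact d :: 'a)"
    using binomial_fact_lemma[OF assms] by (metis of_nat_fact of_nat_mult)
  moreover have "pochhammer (Suc 0) m = (fact m :: nat)"
    using pochhammer_fact[of m, where 'a=nat] by (simp add: One_nat_def)
  ultimately show ?thesis
    by (simp add: reorder_coeff_def field_simps)
qed

lemma reorder_coeff_falling_poly:
  fixes c :: "'a::field_char_0"
  assumes "m \<le> d"
  shows "smult (of_int (reorder_coeff d 0 m)) (pcompose (smult ((-1)^d / fact d) (falling_poly 0 d)) [:-c, 1:])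
    = smult ((-1)^(d - m) / fact (d - m)) (falling_poly (-c) (d - m)) * falling_poly (-c - of_nat (d - m)) m"
proof -
  have "(-1::'a)^m * (-1)^d = (-1)^m * (-1)^m * (-1)^(d - m)"
    using minus_one_power_split[OF assms, where 'a='a] by (metis mult.assoc)
  then have sign: "(-1::'a)^m * (-1)^d = (-1)^(d - m)"
    by (simp only: minus_one_power_square mult_1_left)
  have "of_int (reorder_coeff d 0 m) * (-1)^d / fact d = (of_int (reorder_coeff d 0 m) / fact d) * ((-1)^d :: 'a)"
    by simp
  also have "\<dots> = (-1)^m / fact (d - m) * (-1)^d"
    by (simp only: reorder_coeff_0_div_fact[OF assms])
  also have "\<dots> = (-1)^(d - m) / fact (d - m)"
    using sign by simp
  finally have "of_int (reorder_coeff d 0 m) * (-1)^d / fact d = ((-1)^(d - m) / fact (d - m) :: 'a)" .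
  moreover have "falling_poly (-c) (d - m) * falling_poly (-c - of_nat (d - m)) m = falling_poly (-c) d"
    using falling_poly_add[of "-c" "d - m" m] assms by simp
  ultimately show ?thesis
    by (simp add: pcompose_smult falling_poly_pcompose_shift mult.assoc)
qed

lemma reorder_coeff_rising_poly:
  assumes "m \<le> d"
  shows "smult (of_int (reorder_coeff d 0 m)) (smult (1 / fact d) (rising_poly 0 d))
    = smult ((-1)^m) (rising_poly 0 m) * smult (1 / fact (d - m)) (rising_poly (of_nat m) (d - m) :: 'a::field_char_0 poly)"
proof -
  have "rising_poly 0 m * rising_poly (of_nat m) (d - m) = rising_poly (0::'a) d"
    using rising_poly_add[of m "d - m"] assms by simp
  then show ?thesis
    by (simp add: mult_smult_left mult_smult_right reorder_coeff_0_div_fact[OF assms])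
qed

section \<open>Binomial series in two generators\<close>

definition fa_eval_series ::
    "('g,'a::comm_ring_1) falg \<Rightarrow> ('g,'a) falg \<Rightarrow> (nat \<Rightarrow> 'a poly) \<Rightarrow> ('g,'a) falg fps" where
  "fa_eval_series h e p = Abs_fps (\<lambda>r. fa_eval h (p r) * e ^ r)"

text \<open>If \<open>h\<close> and \<open>e\<close> commuted, these series would be \<open>(1 + e t)^h\<close>, \<open>(1 - e t)^(h + c)\<close>
and \<open>(1 - e t)^-(h + c)\<close>.\<close>

definition binom_plus :: "('g,'a::field_char_0) falg \<Rightarrow> ('g,'a) falg \<Rightarrow> ('g,'a) falg fps" where
  "binom_plus h e = fa_eval_series h e (\<lambda>r. smult (1 / fact r) (falling_poly 0 r))"

definition binom_minus :: "('g,'a::field_char_0) falg \<Rightarrow> ('g,'a) falg \<Rightarrow> 'a \<Rightarrow> ('g,'a) falg fps" where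
  "binom_minus h e c = fa_eval_series h e (\<lambda>r. smult ((-1)^r / fact r) (falling_poly c r))"

definition binom_minus_neg :: "('g,'a::field_char_0) falg \<Rightarrow> ('g,'a) falg \<Rightarrow> 'a \<Rightarrow> ('g,'a) falg fps" where
  "binom_minus_neg h e c = fa_eval_series h e (\<lambda>r. smult (1 / fact r) (rising_poly c r))"

lemma Abs_fps_oneminus_pow:
  "Abs_fps (oneminus_pow e c) = fa_eval_series h e (\<lambda>r. [:(-1)^r * (c gchoose r):])"
  unfolding fa_eval_series_def
  by (rule arg_cong[where f = Abs_fps])
     (simp add: fun_eq_iff oneminus_pow_def fa_eval_const fa_smult_eq fa_pow_eq_power)

lemma fa_eval_series_unit: "fa_eval_series h e (\<lambda>d. if d = 0 then 1 else 0) = 1"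
  by (rule fps_ext) (simp add: fa_eval_series_def)

lemma (in falg_ideal) fa_eval_series_mult:
  assumes "cong_mod I (e * h) ((h + fa_const b) * e)"
  shows "cong_mod (fps_ideal I) (fa_eval_series h e p * fa_eval_series h e q)
    (fa_eval_series h e (\<lambda>d. \<Sum>s\<le>d. p s * pcompose (q (d - s)) [:of_nat s * b, 1:]))"
  unfolding cong_mod_fps_ideal_iff
proof
  fix d
  have "fps_nth (fa_eval_series h e p * fa_eval_series h e q) d
      = (\<Sum>s\<le>d. (fa_eval h (p s) * e ^ s) * (fa_eval h (q (d - s)) * e ^ (d - s)))"
    by (simp add: fa_eval_series_def fps_mult_nth atLeast0AtMost)
  also have "cong_mod I \<dots> (\<Sum>s\<le>d. fa_eval h (p s * pcompose (q (d - s)) [:of_nat s * b, 1:]) * e ^ (s + (d - s)))"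
    by (intro cong_mod_sum fa_eval_power_mult[OF assms])
  also have "\<dots> = fps_nth (fa_eval_series h e (\<lambda>d. \<Sum>s\<le>d. p s * pcompose (q (d - s)) [:of_nat s * b, 1:])) d"
    by (simp add: fa_eval_series_def fa_eval_sum sum_distrib_right)
  finally show "cong_mod I (fps_nth (fa_eval_series h e p * fa_eval_series h e q) d)
      (fps_nth (fa_eval_series h e (\<lambda>d. \<Sum>s\<le>d. p s * pcompose (q (d - s)) [:of_nat s * b, 1:])) d)" .
qed

section \<open>Conjugation by the antipode twist\<close>

locale shift_pair = falg_ideal I for I :: "('g, 'a::field_char_0) falg set" +
  fixes h e :: "('g, 'a::field_char_0) falg"
  assumes e_h: "cong_mod I (e * h) ((h + fa_const (-1)) * e)"
begin

lemma binom_minus_mult_binom_plus: "cong_mod (fps_ideal I) (binom_minus h e 0 * binom_plus h e) 1"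
proof -
  have "cong_mod (fps_ideal I) (binom_minus h e 0 * binom_plus h e)
     (fa_eval_series h e (\<lambda>d. \<Sum>s\<le>d. smult ((-1)^s / fact s) (falling_poly 0 s)
        * pcompose (smult (1 / fact (d - s)) (falling_poly 0 (d - s))) [:of_nat s * -1, 1:]))"
    unfolding binom_minus_def binom_plus_def by (rule fa_eval_series_mult[OF e_h])
  also have "\<dots> = 1"
    by (simp only: mult_minus1_right falling_poly_shifted_convolution fa_eval_series_unit)
  finally show ?thesis .
qed

lemma binom_minus_mult_oneminus_pow:
  "cong_mod (fps_ideal I) (binom_minus h e 0 * Abs_fps (oneminus_pow e c)) (binom_minus h e c)"
proof -
  have "cong_mod (fps_ideal I) (binom_minus h e 0 * Abs_fps (oneminus_pow e c))
     (fa_eval_series h e (\<lambda>d. \<Sum>s\<le>d. smult ((-1)^s / fact s) (falling_poly 0 s)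
        * pcompose [:(-1)^(d - s) * (c gchoose (d - s)):] [:of_nat s * -1, 1:]))"
    unfolding binom_minus_def Abs_fps_oneminus_pow[of e c h] by (rule fa_eval_series_mult[OF e_h])
  also have "\<dots> = binom_minus h e c"
    by (simp only: pcompose_const falling_poly_gchoose_convolution binom_minus_def)
  finally show ?thesis .
qed

end

definition antipode_tail :: "('g,'a::field_char_0) falg \<Rightarrow> (nat \<Rightarrow> ('g,'a) falg) \<Rightarrow> ('g,'a) falg fps" where
  "antipode_tail h Q = Abs_fps (\<lambda>m. Q m * fa_eval h (rising_poly 1 m))"

locale antipode_setting = shift_pair +
  fixes x :: "('g, 'a::field_char_0) falg" and Q :: "nat \<Rightarrow> ('g, 'a) falg" and c :: 'a
  assumes x_h: "cong_mod I (x * h) ((h + fa_const (-c)) * x)"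
    and h_Q: "\<And>m. cong_mod I (h * Q m) (Q m * (h + fa_const (c + of_nat m)))"
    and Q_e: "\<And>m. cong_mod I (Q m * e) (e * Q m - of_nat (Suc m) * Q (Suc m))"
    and Q_0: "Q 0 = x"
begin

lemma reordered_term_cong:
  assumes md: "m \<le> d"
  shows "cong_mod I
    (fa_eval h (smult (of_int (reorder_coeff d 0 m)) (pcompose (smult ((-1)^d / fact d) (falling_poly 0 d)) [:-c, 1:]))
      * (e ^ (d - m) * Q m))
    (fps_nth (binom_minus h e (-c)) (d - m) * (Q m * fa_eval h (rising_poly 1 m)))"
proof -
  \<comment> \<open>Split \<open>(h - c)^[d]\<close> as \<open>(h - c)^[d - m] (h - c - (d - m))^[m]\<close>; the second factor
      moves past \<open>e^(d - m)\<close> and \<open>Q m\<close> and becomes \<open>(h + 1)^<m>\<close>.\<close>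
  define u where "u = d - m"
  define A where "A = smult ((-1)^u / fact u) (falling_poly (-c) u)"
  define B where "B = falling_poly (-c - of_nat u) m"
  have "fa_eval h (smult (of_int (reorder_coeff d 0 m)) (pcompose (smult ((-1)^d / fact d) (falling_poly 0 d)) [:-c, 1:]))
      * (e ^ u * Q m) = fa_eval h A * ((fa_eval h B * e ^ u) * Q m)"
    unfolding A_def B_def u_def reorder_coeff_falling_poly[OF md] by (simp only: fa_eval_mult mult.assoc)
  also have "cong_mod I \<dots> (fa_eval h A * ((e ^ u * fa_eval h (falling_poly (-c) m)) * Q m))"
  proof -
    have "cong_mod I (e ^ u * fa_eval h (falling_poly (-c) m))
        (fa_eval h (pcompose (falling_poly (-c) m) [:of_nat u * -1, 1:]) * e ^ u)"
      by (rule power_mult_fa_eval_shift[OF e_h])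
    also have "pcompose (falling_poly (-c) m) [:of_nat u * -1, 1:] = B"
      by (simp add: B_def falling_poly_pcompose_shift)
    finally have "cong_mod I (fa_eval h B * e ^ u) (e ^ u * fa_eval h (falling_poly (-c) m))"
      by (rule cong_mod_sym)
    then show ?thesis by (intro cong_mod_mult_left cong_mod_mult_right)
  qed
  also have "\<dots> = (fa_eval h A * e ^ u) * (fa_eval h (falling_poly (-c) m) * Q m)"
    by (simp add: mult.assoc)
  also have "cong_mod I \<dots> ((fa_eval h A * e ^ u) * (Q m * fa_eval h (pcompose (falling_poly (-c) m) [:c + of_nat m, 1:])))"
    by (intro cong_mod_mult_left fa_eval_mult_shift h_Q)
  also have "pcompose (falling_poly (-c) m) [:c + of_nat m, 1:] = rising_poly 1 m"
    by (simp add: falling_poly_pcompose_shift falling_poly_eq_rising_poly)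
  also have "fa_eval h A * e ^ u = fps_nth (binom_minus h e (-c)) u"
    by (simp add: binom_minus_def fa_eval_series_def A_def)
  finally show ?thesis unfolding u_def .
qed

lemma const_mult_binom_minus:
  "cong_mod (fps_ideal I) (fps_const x * binom_minus h e 0) (binom_minus h e (-c) * antipode_tail h Q)"
  unfolding cong_mod_fps_ideal_iff
proof
  fix d
  define w where "w = pcompose (smult ((-1)^d / fact d) (falling_poly (0::'a) d)) [:-c, 1:]"
  have "fps_nth (fps_const x * binom_minus h e 0) d = (x * fa_eval h (smult ((-1)^d / fact d) (falling_poly 0 d))) * e ^ d"
    by (simp add: binom_minus_def fa_eval_series_def mult.assoc)
  also have "cong_mod I \<dots> ((fa_eval h w * x) * e ^ d)"
    unfolding w_def using x_h by (intro cong_mod_mult_right mult_fa_eval_shift)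
  also have "\<dots> = fa_eval h w * (Q 0 * e ^ d)"
    by (simp add: mult.assoc Q_0)
  also have "cong_mod I \<dots> (fa_eval h w * (\<Sum>m\<le>d. of_int (reorder_coeff d 0 m) * (e ^ (d - m) * Q (0 + m))))"
    by (intro cong_mod_mult_left cong_mod_mult_power_reorder Q_e)
  also have "\<dots> = (\<Sum>m\<le>d. fa_eval h (smult (of_int (reorder_coeff d 0 m)) w) * (e ^ (d - m) * Q m))"
    by (simp add: sum_distrib_left fa_eval_of_int_mult_right)
  also have "cong_mod I \<dots> (\<Sum>m\<le>d. fps_nth (binom_minus h e (-c)) (d - m) * (Q m * fa_eval h (rising_poly 1 m)))"
    unfolding w_def by (intro cong_mod_sum reordered_term_cong) simp
  also have "\<dots> = fps_nth (binom_minus h e (-c) * antipode_tail h Q) d"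
    by (simp add: fps_mult_nth_rev antipode_tail_def)
  finally show "cong_mod I (fps_nth (fps_const x * binom_minus h e 0) d)
      (fps_nth (binom_minus h e (-c) * antipode_tail h Q) d)" .
qed

lemma conj_binom_plus_const:
  assumes "binom_plus h e * Vi = 1"
  shows "cong_mod (fps_ideal I) (binom_plus h e * fps_const (- x) * Vi)
    (- (Abs_fps (oneminus_pow e (-c)) * antipode_tail h Q))"
proof -
  let ?W = "binom_minus h e 0" and ?P = "Abs_fps (oneminus_pow e (-c))"
  have "cong_mod (fps_ideal I) (fps_const x * ?W) (binom_minus h e (-c) * antipode_tail h Q)"
    by (rule const_mult_binom_minus)
  also have "cong_mod (fps_ideal I) \<dots> ((?W * ?P) * antipode_tail h Q)"
    by (intro fps.cong_mod_mult_right fps.cong_mod_sym[OF binom_minus_mult_oneminus_pow])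
  finally have "cong_mod (fps_ideal I) (fps_const x * ?W) (?W * (?P * antipode_tail h Q))"
    by (simp add: mult.assoc)
  then have "cong_mod (fps_ideal I) (binom_plus h e * fps_const x) ((?P * antipode_tail h Q) * binom_plus h e)"
    by (rule fps.cong_mod_mult_swap_inverse[OF binom_minus_mult_binom_plus assms])
  then have "cong_mod (fps_ideal I) (binom_plus h e * fps_const (- x)) ((- (?P * antipode_tail h Q)) * binom_plus h e)"
    by (simp add: fps.cong_mod_uminus flip: fps_const_neg)
  then show ?thesis by (rule fps.cong_mod_conj_inverse[OF assms])
qed

end

section \<open>Conjugation by the coproduct twist\<close>

locale commuting_pair = falg_ideal I for I :: "('g, 'a::field_char_0) falg set" +
  fixes H E :: "('g, 'a::field_char_0) falg"
  assumes E_H: "cong_mod I (E * H) (H * E)"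
begin

lemma E_H_shift: "cong_mod I (E * H) ((H + fa_const 0) * E)"
  using E_H by simp

lemma binom_minus_neg_mult_binom_minus:
  "cong_mod (fps_ideal I) (binom_minus_neg H E 0 * binom_minus H E 0) 1"
proof -
  have "cong_mod (fps_ideal I) (binom_minus_neg H E 0 * binom_minus H E 0)
     (fa_eval_series H E (\<lambda>d. \<Sum>s\<le>d. smult (1 / fact s) (rising_poly 0 s)
        * pcompose (smult ((-1)^(d - s) / fact (d - s)) (falling_poly 0 (d - s))) [:of_nat s * 0, 1:]))"
    unfolding binom_minus_def binom_minus_neg_def by (rule fa_eval_series_mult[OF E_H_shift])
  also have "\<dots> = 1"
    by (simp only: mult_zero_right pcompose_idR rising_falling_poly_convolution fa_eval_series_unit)
  finally show ?thesis .
qed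

lemma binom_minus_mult_binom_minus_neg:
  "cong_mod (fps_ideal I) (binom_minus H E 0 * binom_minus_neg H E (of_nat m))
    (Abs_fps (oneminus_pow E (- of_nat m)))"
proof -
  have "cong_mod (fps_ideal I) (binom_minus H E 0 * binom_minus_neg H E (of_nat m))
     (fa_eval_series H E (\<lambda>u. \<Sum>i\<le>u. smult ((-1)^i / fact i) (falling_poly 0 i)
        * pcompose (smult (1 / fact (u - i)) (rising_poly (of_nat m) (u - i))) [:of_nat i * 0, 1:]))"
    unfolding binom_minus_def binom_minus_neg_def by (rule fa_eval_series_mult[OF E_H_shift])
  also have "\<dots> = Abs_fps (oneminus_pow E (- of_nat m))"
    by (simp only: mult_zero_right pcompose_idR falling_rising_poly_convolution
        Abs_fps_oneminus_pow[of E _ H, symmetric])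
  finally show ?thesis .
qed

lemma oneminus_pow_mult_binom_minus:
  "cong_mod (fps_ideal I) (Abs_fps (oneminus_pow E c) * binom_minus H E 0) (binom_minus H E c)"
proof -
  have "cong_mod (fps_ideal I) (Abs_fps (oneminus_pow E c) * binom_minus H E 0)
     (fa_eval_series H E (\<lambda>d. \<Sum>i\<le>d. [:(-1)^i * (c gchoose i):]
        * pcompose (smult ((-1)^(d - i) / fact (d - i)) (falling_poly 0 (d - i))) [:of_nat i * 0, 1:]))"
    unfolding binom_minus_def Abs_fps_oneminus_pow[of E c H] by (rule fa_eval_series_mult[OF E_H_shift])
  also have "\<dots> = binom_minus H E c"
    by (simp only: mult_zero_right pcompose_idR falling_poly_pcompose_Vandermonde[symmetric]
        pcompose_smult falling_poly_pcompose_shift add_0 binom_minus_def)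
  finally show ?thesis .
qed

lemma binom_minus_commute_const:
  "cong_mod (fps_ideal I) (binom_minus H E 0 * fps_const (fa_eval H p)) (fps_const (fa_eval H p) * binom_minus H E 0)"
  unfolding cong_mod_fps_ideal_iff
proof
  fix r
  define f where "f = smult ((-1)^r / fact r) (falling_poly (0::'a) r)"
  have "fps_nth (binom_minus H E 0 * fps_const (fa_eval H p)) r = fa_eval H f * (E ^ r * fa_eval H p)"
    by (simp add: binom_minus_def fa_eval_series_def f_def mult.assoc)
  also have "cong_mod I \<dots> (fa_eval H f * (fa_eval H (pcompose p [:of_nat r * 0, 1:]) * E ^ r))"
    by (intro cong_mod_mult_left power_mult_fa_eval_shift E_H_shift)
  also have "\<dots> = fa_eval H p * (fa_eval H f * E ^ r)"
    by (simp add: mult.assoc[symmetric] fa_eval_mult[symmetric] mult.commute)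
  also have "\<dots> = fps_nth (fps_const (fa_eval H p) * binom_minus H E 0) r"
    by (simp add: binom_minus_def fa_eval_series_def f_def)
  finally show "cong_mod I (fps_nth (binom_minus H E 0 * fps_const (fa_eval H p)) r)
      (fps_nth (fps_const (fa_eval H p) * binom_minus H E 0) r)" .
qed

end

definition coproduct_tail ::
    "('g,'a::field_char_0) falg \<Rightarrow> ('g,'a) falg \<Rightarrow> (nat \<Rightarrow> ('g,'a) falg) \<Rightarrow> ('g,'a) falg fps" where
  "coproduct_tail H E Q = fps_shifted_sum (\<lambda>m. fps_const (fa_eval H (smult ((-1)^m) (rising_poly 0 m)))
     * Abs_fps (oneminus_pow E (- of_nat m)) * fps_const (Q m))"

locale coproduct_setting = commuting_pair +
  fixes X :: "('g, 'a::field_char_0) falg" and Q :: "nat \<Rightarrow> ('g, 'a) falg" and c :: 'a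
  assumes H_X: "cong_mod I (H * X) (X * (H + fa_const c))"
    and E_X: "cong_mod I (E * X) (X * E)"
    and H_Q: "\<And>m. cong_mod I (H * Q m) (Q m * H)"
    and Q_E: "\<And>m. cong_mod I (Q m * E) (E * Q m - of_nat (Suc m) * Q (Suc m))"
begin

lemma binom_minus_mult_const: "cong_mod (fps_ideal I) (binom_minus H E 0 * fps_const X) (fps_const X * binom_minus H E c)"
  unfolding cong_mod_fps_ideal_iff
proof
  fix d
  define f where "f = smult ((-1)^d / fact d) (falling_poly (0::'a) d)"
  have "fps_nth (binom_minus H E 0 * fps_const X) d = fa_eval H f * (E ^ d * X)"
    by (simp add: binom_minus_def fa_eval_series_def f_def mult.assoc)
  also have "cong_mod I \<dots> (fa_eval H f * (X * E ^ d))"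
    by (intro cong_mod_mult_left cong_mod_power_commute E_X)
  also have "\<dots> = (fa_eval H f * X) * E ^ d"
    by (simp add: mult.assoc)
  also have "cong_mod I \<dots> ((X * fa_eval H (pcompose f [:c, 1:])) * E ^ d)"
    by (intro cong_mod_mult_right fa_eval_mult_shift H_X)
  also have "\<dots> = fps_nth (fps_const X * binom_minus H E c) d"
    by (simp add: binom_minus_def fa_eval_series_def f_def pcompose_smult falling_poly_pcompose_shift mult.assoc)
  finally show "cong_mod I (fps_nth (binom_minus H E 0 * fps_const X) d) (fps_nth (fps_const X * binom_minus H E c) d)" .
qed

lemma const_mult_binom_minus_neg:
  "cong_mod (fps_ideal I) (fps_const (Q 0) * binom_minus_neg H E 0)
     (fps_shifted_sum (\<lambda>m. fps_const (fa_eval H (smult ((-1)^m) (rising_poly 0 m)))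
        * binom_minus_neg H E (of_nat m) * fps_const (Q m)))"
  unfolding cong_mod_fps_ideal_iff
proof
  fix d
  define g where "g = smult (1 / fact d) (rising_poly (0::'a) d)"
  have "fps_nth (fps_const (Q 0) * binom_minus_neg H E 0) d = (Q 0 * fa_eval H g) * E ^ d"
    by (simp add: binom_minus_neg_def fa_eval_series_def g_def mult.assoc)
  also have "cong_mod I \<dots> ((fa_eval H (pcompose g [:0, 1:]) * Q 0) * E ^ d)"
    using cong_mod_sym[OF H_Q[of 0]] by (intro cong_mod_mult_right mult_fa_eval_shift) simp
  also have "\<dots> = fa_eval H g * (Q 0 * E ^ d)"
    by (simp add: mult.assoc)
  also have "cong_mod I \<dots> (fa_eval H g * (\<Sum>m\<le>d. of_int (reorder_coeff d 0 m) * (E ^ (d - m) * Q (0 + m))))"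
    by (intro cong_mod_mult_left cong_mod_mult_power_reorder Q_E)
  also have "\<dots> = (\<Sum>m\<le>d. fa_eval H (smult (of_int (reorder_coeff d 0 m)) g) * (E ^ (d - m) * Q m))"
    by (simp add: sum_distrib_left fa_eval_of_int_mult_right)
  also have "\<dots> = (\<Sum>m\<le>d. fa_eval H (smult ((-1)^m) (rising_poly 0 m))
      * (fa_eval H (smult (1 / fact (d - m)) (rising_poly (of_nat m) (d - m))) * E ^ (d - m)) * Q m)"
    unfolding g_def by (intro sum.cong refl) (simp only: reorder_coeff_rising_poly atMost_iff fa_eval_mult mult.assoc)
  also have "\<dots> = fps_nth (fps_shifted_sum (\<lambda>m. fps_const (fa_eval H (smult ((-1)^m) (rising_poly 0 m)))
        * binom_minus_neg H E (of_nat m) * fps_const (Q m))) d"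
    by (simp add: fps_shifted_sum_def binom_minus_neg_def fa_eval_series_def)
  finally show "cong_mod I (fps_nth (fps_const (Q 0) * binom_minus_neg H E 0) d)
      (fps_nth (fps_shifted_sum (\<lambda>m. fps_const (fa_eval H (smult ((-1)^m) (rising_poly 0 m)))
        * binom_minus_neg H E (of_nat m) * fps_const (Q m))) d)" .
qed

lemma binom_minus_mult_const_Q0:
  "cong_mod (fps_ideal I) (binom_minus H E 0 * fps_const (Q 0)) (coproduct_tail H E Q * binom_minus H E 0)"
proof -
  let ?F = "binom_minus H E 0" and ?G = "\<lambda>m. binom_minus_neg H E (of_nat m)"
  let ?A = "\<lambda>m. fps_const (fa_eval H (smult ((-1)^m) (rising_poly 0 m)))"
  have termwise: "cong_mod (fps_ideal I) (?F * (?A m * ?G m * fps_const (Q m)))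
      (?A m * Abs_fps (oneminus_pow E (- of_nat m)) * fps_const (Q m))" for m
  proof -
    have "?F * (?A m * ?G m * fps_const (Q m)) = (?F * ?A m) * ?G m * fps_const (Q m)"
      by (simp add: mult.assoc)
    also have "cong_mod (fps_ideal I) \<dots> ((?A m * ?F) * ?G m * fps_const (Q m))"
      by (intro fps.cong_mod_mult_right binom_minus_commute_const)
    also have "\<dots> = ?A m * (?F * ?G m) * fps_const (Q m)"
      by (simp add: mult.assoc)
    also have "cong_mod (fps_ideal I) \<dots> (?A m * Abs_fps (oneminus_pow E (- of_nat m)) * fps_const (Q m))"
      by (intro fps.cong_mod_mult_right fps.cong_mod_mult_left binom_minus_mult_binom_minus_neg)
    finally show ?thesis .
  qed
  \<comment> \<open>Insert \<open>G 0 F = 1\<close>, expand \<open>Q 0 G 0\<close> into the \<open>Q m\<close>, and collapse each \<open>F G m\<close>.\<close>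
  have "?F * fps_const (Q 0) = ?F * fps_const (Q 0) * 1"
    by simp
  also have "cong_mod (fps_ideal I) \<dots> (?F * fps_const (Q 0) * (binom_minus_neg H E 0 * ?F))"
    by (intro fps.cong_mod_mult_left fps.cong_mod_sym[OF binom_minus_neg_mult_binom_minus])
  also have "\<dots> = ?F * (fps_const (Q 0) * binom_minus_neg H E 0) * ?F"
    by (simp add: mult.assoc)
  also have "cong_mod (fps_ideal I) \<dots> (?F * fps_shifted_sum (\<lambda>m. ?A m * ?G m * fps_const (Q m)) * ?F)"
    by (intro fps.cong_mod_mult_left fps.cong_mod_mult_right const_mult_binom_minus_neg)
  also have "\<dots> = fps_shifted_sum (\<lambda>m. ?F * (?A m * ?G m * fps_const (Q m))) * ?F"
    by (simp only: mult_fps_shifted_sum)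
  also have "cong_mod (fps_ideal I) \<dots> (coproduct_tail H E Q * ?F)"
    unfolding coproduct_tail_def by (intro fps.cong_mod_mult_right cong_mod_fps_shifted_sum termwise)
  finally show ?thesis .
qed

lemma conj_binom_minus_const:
  assumes "binom_minus H E 0 * Fi = 1"
  shows "cong_mod (fps_ideal I) (binom_minus H E 0 * fps_const (X + Q 0) * Fi)
    (fps_const X * Abs_fps (oneminus_pow E c) + coproduct_tail H E Q)"
proof (rule fps.cong_mod_conj_inverse[OF assms])
  let ?F = "binom_minus H E 0"
  have "cong_mod (fps_ideal I) (?F * fps_const X) (fps_const X * (Abs_fps (oneminus_pow E c) * ?F))"
    using binom_minus_mult_const
    by (rule fps.cong_mod_trans) (intro fps.cong_mod_mult_left fps.cong_mod_sym[OF oneminus_pow_mult_binom_minus])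
  then have "cong_mod (fps_ideal I) (?F * fps_const X + ?F * fps_const (Q 0))
      (fps_const X * Abs_fps (oneminus_pow E c) * ?F + coproduct_tail H E Q * ?F)"
    by (simp add: fps.cong_mod_add binom_minus_mult_const_Q0 mult.assoc)
  then show "cong_mod (fps_ideal I) (?F * fps_const (X + Q 0))
      ((fps_const X * Abs_fps (oneminus_pow E c) + coproduct_tail H E Q) * ?F)"
    by (simp add: distrib_left distrib_right flip: fps_const_add)
qed

end

section \<open>The type K algebra and its enveloping algebra\<close>

lemma sum_symmetric_interval:
  "(\<Sum>i\<in>{- int n..int n}. f i) = f 0 + (\<Sum>i\<in>{1..int n}. f i + f (- i))"
proof (induction n)
  case (Suc n)
  have "{- int (Suc n)..int (Suc n)} = insert (- int (Suc n)) (insert (int (Suc n)) {- int n..int n})"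
    and "{1..int (Suc n)} = insert (int (Suc n)) {1..int n}"
    by auto
  with Suc show ?case by (simp add: algebra_simps)
qed simp

definition hvec :: "int \<Rightarrow> int \<Rightarrow> int" where
  "hvec k = (\<lambda>j. eps k j + eps (-k) j)"

definition evec :: "int \<Rightarrow> int \<Rightarrow> int" where
  "evec k = (\<lambda>j. eps k j + eps 0 j)"

lemma hK_eq: "hK k = fa_gen (hvec k)"
  by (simp add: hK_def hvec_def)

lemma eK_eq: "eK k = fa_gen (evec k)"
  by (simp add: eK_def evec_def)

lemma Kbracket_hvec:
  assumes "1 \<le> k" "k \<le> int n"
  shows "(Kbracket n (hvec k) \<beta> :: (int \<Rightarrow> int, 'a::comm_ring_1) falg)
    = fa_smult (of_int (\<beta> k - \<beta> (-k))) (fa_gen \<beta>)"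
proof -
  have "(\<Sum>i\<in>{1..int n}. hvec k i + hvec k (-i)) = (\<Sum>i\<in>{1..int n}. if i = k then 2 else 0)"
    by (rule sum.cong) (use assms in \<open>auto simp: hvec_def eps_def\<close>)
  then have two: "(\<Sum>i\<in>{1..int n}. hvec k i + hvec k (-i)) = 2"
    using assms by simp
  have "(\<Sum>i\<in>{1..int n}. fa_smult (of_int (hvec k (-i) * \<beta> i - hvec k i * \<beta> (-i)))
            (fa_gen (\<lambda>j. hvec k j + \<beta> j - eps i j - eps (-i) j)) :: (int \<Rightarrow> int, 'a) falg)
      = (\<Sum>i\<in>{1..int n}. if i = k then fa_smult (of_int (\<beta> k - \<beta> (-k))) (fa_gen \<beta>) else 0)"
  proof (rule sum.cong[OF refl])
    fix i assume "i \<in> {1..int n}"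
    moreover have "(\<lambda>j. hvec k j + \<beta> j - eps k j - eps (-k) j) = \<beta>"
      by (auto simp: hvec_def)
    ultimately show "fa_smult (of_int (hvec k (-i) * \<beta> i - hvec k i * \<beta> (-i)))
          (fa_gen (\<lambda>j. hvec k j + \<beta> j - eps i j - eps (-i) j))
        = (if i = k then fa_smult (of_int (\<beta> k - \<beta> (-k))) (fa_gen \<beta>) else (0 :: (int \<Rightarrow> int, 'a) falg))"
      using assms by (auto simp: fa_smult_eq hvec_def eps_def)
  qed
  moreover have "hvec k 0 = 0"
    using assms by (simp add: hvec_def eps_def)
  ultimately show ?thesis
    using assms unfolding Kbracket_def two by (simp add: fa_smult_eq)
qed

lemma Kbracket_evec:
  assumes "1 \<le> k" "k \<le> int n"
  shows "(Kbracket n (evec k) \<beta> :: (int \<Rightarrow> int, 'a::comm_ring_1) falg)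
    = fa_smult (of_int ((\<Sum>i\<in>{1..int n}. \<beta> i + \<beta> (-i)) + \<beta> 0 - 2)) (fa_gen (\<lambda>j. \<beta> j + eps k j))
    + fa_smult (of_int (- \<beta> (-k))) (fa_gen (\<lambda>j. \<beta> j + eps 0 j - eps (-k) j))"
proof -
  have "(\<Sum>i\<in>{1..int n}. evec k i + evec k (-i)) = (\<Sum>i\<in>{1..int n}. if i = k then 1 else 0)"
    by (rule sum.cong) (use assms in \<open>auto simp: evec_def eps_def\<close>)
  then have one: "(\<Sum>i\<in>{1..int n}. evec k i + evec k (-i)) = 1"
    using assms by simp
  have "(\<Sum>i\<in>{1..int n}. fa_smult (of_int (evec k (-i) * \<beta> i - evec k i * \<beta> (-i)))
            (fa_gen (\<lambda>j. evec k j + \<beta> j - eps i j - eps (-i) j)) :: (int \<Rightarrow> int, 'a) falg)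
      = (\<Sum>i\<in>{1..int n}. if i = k then fa_smult (of_int (- \<beta> (-k))) (fa_gen (\<lambda>j. \<beta> j + eps 0 j - eps (-k) j)) else 0)"
  proof (rule sum.cong[OF refl])
    fix i assume "i \<in> {1..int n}"
    moreover have "(\<lambda>j. evec k j + \<beta> j - eps k j - eps (-k) j) = (\<lambda>j. \<beta> j + eps 0 j - eps (-k) j)"
      by (auto simp: evec_def)
    ultimately show "fa_smult (of_int (evec k (-i) * \<beta> i - evec k i * \<beta> (-i)))
          (fa_gen (\<lambda>j. evec k j + \<beta> j - eps i j - eps (-i) j))
        = (if i = k then fa_smult (of_int (- \<beta> (-k))) (fa_gen (\<lambda>j. \<beta> j + eps 0 j - eps (-k) j))
           else (0 :: (int \<Rightarrow> int, 'a) falg))"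
      using assms by (auto simp: fa_smult_eq evec_def eps_def)
  qed
  moreover have "evec k 0 = 1" "(\<lambda>j. evec k j + \<beta> j - eps 0 j) = (\<lambda>j. \<beta> j + eps k j)"
    using assms by (auto simp: evec_def eps_def)
  ultimately show ?thesis
    using assms unfolding Kbracket_def one by (simp add: algebra_simps)
qed

lemma falg_ideal_two_sided_ideal: "falg_ideal (two_sided_ideal R)"
  by unfold_locales
    (auto intro: two_sided_ideal.zero two_sided_ideal.add two_sided_ideal.lmult[where a=c for c]
      two_sided_ideal.rmult simp: fa_mult_eq_times[symmetric])

lemma cong_mod_IU_bracket:
  assumes "a \<in> Kidx n" "b \<in> Kidx n"
  shows "cong_mod (IU n) (fa_gen a * fa_gen b) (fa_gen b * fa_gen a + (Kbracket n a b :: (int \<Rightarrow> int, 'a::comm_ring_1) falg))"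
proof -
  have "fa_mult (fa_gen a) (fa_gen b) - fa_mult (fa_gen b) (fa_gen a) - (Kbracket n a b :: (int \<Rightarrow> int, 'a) falg) \<in> IU n"
    using assms unfolding IU_def relU_def by (blast intro: two_sided_ideal.gen)
  then show ?thesis by (simp add: cong_mod_def fa_mult_eq_times algebra_simps)
qed

lemma cong_mod_IUU_swap:
  assumes "a \<in> Kidx n" "b \<in> Kidx n"
  shows "cong_mod (IUU n) (fa_gen (Inl a) * fa_gen (Inr b))
    (fa_gen (Inr b) * (fa_gen (Inl a) :: ((int \<Rightarrow> int) + (int \<Rightarrow> int), 'a::comm_ring_1) falg))"
proof -
  have "fa_mult (fa_gen (Inl a)) (fa_gen (Inr b)) - fa_mult (fa_gen (Inr b)) (fa_gen (Inl a))
      \<in> (IUU n :: ((int \<Rightarrow> int) + (int \<Rightarrow> int), 'a) falg set)"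
    using assms unfolding IUU_def relUU_def by (blast intro: two_sided_ideal.gen)
  then show ?thesis by (simp add: cong_mod_def fa_mult_eq_times)
qed

lemma fa_map_mem_IUU:
  assumes "p \<in> IU n" and "f = Inl \<or> f = Inr"
  shows "fa_map f p \<in> IUU n"
  using assms(1) unfolding IU_def IUU_def
proof (induction rule: two_sided_ideal.induct)
  case (gen r)
  then show ?case using assms(2) unfolding relUU_def by (blast intro: two_sided_ideal.gen)
next
  case (lmult x a)
  then show ?case by (metis fa_map_mult fa_mult_eq_times two_sided_ideal.lmult)
next
  case (rmult x a)
  then show ?case by (metis fa_map_mult fa_mult_eq_times two_sided_ideal.rmult)
qed (auto simp: fa_map_add intro: two_sided_ideal.intros)

lemma cong_mod_IUU_fa_map:
  "cong_mod (IU n) a b \<Longrightarrow> f = Inl \<or> f = Inr \<Longrightarrow> cong_mod (IUU n) (fa_map f a) (fa_map f b)"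
  unfolding cong_mod_def by (metis fa_map_diff fa_map_mem_IUU)

lemma (in falg_ideal) cong_mod_mult_lincomb:
  assumes "\<And>j. j \<in> A \<Longrightarrow> cong_mod I (z * g j) (g j * w)"
  shows "cong_mod I (z * (\<Sum>j\<in>A. fa_smult (a j) (g j))) ((\<Sum>j\<in>A. fa_smult (a j) (g j)) * w)"
proof -
  have "z * (\<Sum>j\<in>A. fa_smult (a j) (g j)) = (\<Sum>j\<in>A. fa_smult (a j) (z * g j))"
    by (simp add: sum_distrib_left mult_fa_smult)
  also have "cong_mod I \<dots> (\<Sum>j\<in>A. fa_smult (a j) (g j * w))"
    unfolding fa_smult_eq by (intro cong_mod_sum cong_mod_mult_left assms)
  also have "\<dots> = (\<Sum>j\<in>A. fa_smult (a j) (g j)) * w"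
    by (simp add: sum_distrib_right fa_smult_mult_left)
  finally show ?thesis .
qed

lemma Acoef_Suc:
  "Acoef \<alpha> k (Suc j) * of_nat (Suc j) = Acoef \<alpha> k j * (of_nat j - of_int (\<alpha> (-k)) :: 'a::field_char_0)"
  unfolding Acoef_def prod.lessThan_Suc fact_Suc by (simp add: field_simps del: of_nat_Suc)

lemma Bcoef_Suc:
  "Bcoef n \<alpha> (Suc m) * of_nat (Suc m) = Bcoef n \<alpha> m * (of_int (knorm n \<alpha> - \<alpha> 0) + of_nat m :: 'a::field_char_0)"
  unfolding Bcoef_def prod.lessThan_Suc fact_Suc by (simp add: field_simps del: of_nat_Suc)

text \<open>\<open>divided_ad n k \<alpha> m\<close> is \<open>(ad e)^m (x^\<alpha>) / m!\<close>, as \<open>divided_ad_mult_eK\<close> shows.\<close>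

definition divided_ad ::
    "nat \<Rightarrow> int \<Rightarrow> (int \<Rightarrow> int) \<Rightarrow> nat \<Rightarrow> (int \<Rightarrow> int, 'a::field_char_0) falg" where
  "divided_ad n k \<alpha> m = (\<Sum>j\<le>m. fa_smult (Acoef \<alpha> k j * Bcoef n \<alpha> (m - j)) (fa_gen (gam \<alpha> k m j)))"

locale K_index =
  fixes n :: nat and k :: int and \<alpha> :: "int \<Rightarrow> int"
  assumes k_ge_1: "1 \<le> k" and k_le_n: "k \<le> int n" and \<alpha>_Kidx: "\<alpha> \<in> Kidx n"
begin

lemma hvec_Kidx: "hvec k \<in> Kidx n"
  using k_ge_1 k_le_n by (auto simp: Kidx_def hvec_def eps_def)

lemma evec_Kidx: "evec k \<in> Kidx n"
  using k_ge_1 k_le_n by (auto simp: Kidx_def evec_def eps_def)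

lemma gam_Kidx: "gam \<alpha> k m j \<in> Kidx n"
  using k_ge_1 k_le_n \<alpha>_Kidx by (auto simp: Kidx_def gam_def eps_def)

lemma gam_0_0: "gam \<alpha> k 0 0 = \<alpha>"
  by (simp add: gam_def)

lemma gam_Suc: "j \<le> m \<Longrightarrow> (\<lambda>i. gam \<alpha> k m j i + eps k i) = gam \<alpha> k (Suc m) j"
  by (auto simp: gam_def Suc_diff_le algebra_simps)

lemma gam_Suc_Suc: "(\<lambda>i. gam \<alpha> k m j i + eps 0 i - eps (-k) i) = gam \<alpha> k (Suc m) (Suc j)"
  by (auto simp: gam_def algebra_simps)

lemma gam_minus_k: "gam \<alpha> k m j (-k) = \<alpha> (-k) - int j"
  using k_ge_1 by (simp add: gam_def eps_def)

lemma gam_weight: "j \<le> m \<Longrightarrow> gam \<alpha> k m j k - gam \<alpha> k m j (-k) = \<alpha> k - \<alpha> (-k) + int m"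
  using k_ge_1 by (simp add: gam_def eps_def of_nat_diff)

lemma sum_gam: "(\<Sum>i\<in>{- int n..int n}. gam \<alpha> k m j i) = (\<Sum>i\<in>{- int n..int n}. \<alpha> i) + int (m - j)"
  using k_ge_1 k_le_n
  by (simp add: gam_def sum.distrib sum_subtractf sum_distrib_left[symmetric] eps_def)

lemma divided_ad_0: "divided_ad n k \<alpha> 0 = fa_gen \<alpha>"
  by (simp add: divided_ad_def gam_0_0 Acoef_def Bcoef_def)

lemma hK_mult_gen:
  assumes "\<beta> \<in> Kidx n"
  shows "cong_mod (IU n) (hK k * fa_gen \<beta>) (fa_gen \<beta> * (hK k + fa_const (of_int (\<beta> k - \<beta> (-k))))
    :: (int \<Rightarrow> int, 'a::field_char_0) falg)"
  using cong_mod_IU_bracket[OF hvec_Kidx assms, where 'a='a] Kbracket_hvec[OF k_ge_1 k_le_n, of \<beta>, where 'a='a]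
  by (simp add: hK_eq distrib_left fa_smult_eq fa_const_commute)

lemma gen_mult_hK:
  assumes "\<beta> \<in> Kidx n"
  shows "cong_mod (IU n) (fa_gen \<beta> * hK k) ((hK k + fa_const (- of_int (\<beta> k - \<beta> (-k)))) * fa_gen \<beta>
    :: (int \<Rightarrow> int, 'a::field_char_0) falg)"
proof -
  interpret falg_ideal "IU n :: (int \<Rightarrow> int, 'a) falg set"
    unfolding IU_def by (rule falg_ideal_two_sided_ideal)
  have "cong_mod (IU n) (hK k * fa_gen \<beta>) (fa_gen \<beta> * hK k + fa_const (of_int (\<beta> k - \<beta> (-k))) * (fa_gen \<beta>
    :: (int \<Rightarrow> int, 'a) falg))"
    using cong_mod_IU_bracket[OF hvec_Kidx assms, where 'a='a] Kbracket_hvec[OF k_ge_1 k_le_n, of \<beta>, where 'a='a]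
    by (simp add: hK_eq fa_smult_eq)
  then have "- (hK k * fa_gen \<beta> - (fa_gen \<beta> * hK k + fa_const (of_int (\<beta> k - \<beta> (-k))) * fa_gen \<beta>))
      \<in> (IU n :: (int \<Rightarrow> int, 'a) falg set)"
    unfolding cong_mod_def by (rule uminus_mem)
  then show ?thesis
    by (simp add: cong_mod_def algebra_simps fa_const_diff)
qed

lemma gen_mult_eK:
  assumes "\<beta> \<in> Kidx n"
  shows "cong_mod (IU n) (fa_gen \<beta> * eK k) (eK k * fa_gen \<beta> - (Kbracket n (evec k) \<beta> :: (int \<Rightarrow> int, 'a::field_char_0) falg))"
proof -
  interpret falg_ideal "IU n :: (int \<Rightarrow> int, 'a) falg set"
    unfolding IU_def by (rule falg_ideal_two_sided_ideal)
  show ?thesis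
    using cong_mod_sym[OF cong_mod_IU_bracket[OF evec_Kidx assms, where 'a='a]]
    by (simp add: eK_eq cong_mod_def algebra_simps)
qed

lemma eK_mult_hK: "cong_mod (IU n) (eK k * hK k) ((hK k + fa_const (-1)) * (eK k :: (int \<Rightarrow> int, 'a::field_char_0) falg))"
proof -
  have "evec k k - evec k (-k) = 1"
    using k_ge_1 by (simp add: evec_def eps_def)
  then show ?thesis
    using gen_mult_hK[OF evec_Kidx, where 'a='a] by (simp add: eK_eq)
qed

lemma hK_mult_divided_ad:
  "cong_mod (IU n) (hK k * divided_ad n k \<alpha> m)
    (divided_ad n k \<alpha> m * (hK k + fa_const (of_int (\<alpha> k - \<alpha> (-k)) + of_nat m)) :: (int \<Rightarrow> int, 'a::field_char_0) falg)"
proof -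
  interpret falg_ideal "IU n :: (int \<Rightarrow> int, 'a) falg set"
    unfolding IU_def by (rule falg_ideal_two_sided_ideal)
  show ?thesis
    unfolding divided_ad_def
  proof (rule cong_mod_mult_lincomb)
    fix j assume "j \<in> {..m}"
    then have "of_int (gam \<alpha> k m j k - gam \<alpha> k m j (-k)) = (of_int (\<alpha> k - \<alpha> (-k)) + of_nat m :: 'a)"
      by (simp add: gam_weight)
    then show "cong_mod (IU n) (hK k * fa_gen (gam \<alpha> k m j))
        (fa_gen (gam \<alpha> k m j) * (hK k + fa_const (of_int (\<alpha> k - \<alpha> (-k)) + of_nat m)) :: (int \<Rightarrow> int, 'a) falg)"
      using hK_mult_gen[OF gam_Kidx, of m j, where 'a='a] by simp
  qed
qed

lemma Kbracket_evec_gam: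
  assumes "j \<le> m"
  shows "(Kbracket n (evec k) (gam \<alpha> k m j) :: (int \<Rightarrow> int, 'a::field_char_0) falg)
    = fa_smult (of_int (knorm n \<alpha> - \<alpha> 0) + of_nat (m - j)) (fa_gen (gam \<alpha> k (Suc m) j))
    + fa_smult (of_nat j - of_int (\<alpha> (-k))) (fa_gen (gam \<alpha> k (Suc m) (Suc j)))"
proof -
  have "(\<Sum>i\<in>{1..int n}. gam \<alpha> k m j i + gam \<alpha> k m j (-i)) + gam \<alpha> k m j 0
      = (\<Sum>i\<in>{- int n..int n}. \<alpha> i) + int (m - j)"
    using sum_gam[of m j] sum_symmetric_interval[of "gam \<alpha> k m j" n] by simp
  then have "of_int ((\<Sum>i\<in>{1..int n}. gam \<alpha> k m j i + gam \<alpha> k m j (-i)) + gam \<alpha> k m j 0 - 2)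
      = (of_int (knorm n \<alpha> - \<alpha> 0) + of_nat (m - j) :: 'a)"
    by (simp add: knorm_def)
  then show ?thesis
    using Kbracket_evec[OF k_ge_1 k_le_n, of "gam \<alpha> k m j", where 'a='a] gam_Suc[OF assms] gam_Suc_Suc[of m j]
    by (simp add: gam_minus_k)
qed

lemma smult_Kbracket_evec_gam:
  assumes "j \<le> m"
  shows "fa_smult (Acoef \<alpha> k j * Bcoef n \<alpha> (m - j)) (Kbracket n (evec k) (gam \<alpha> k m j))
    = fa_smult (Acoef \<alpha> k j * Bcoef n \<alpha> (Suc m - j) * of_nat (Suc m - j)) (fa_gen (gam \<alpha> k (Suc m) j))
    + fa_smult (Acoef \<alpha> k (Suc j) * Bcoef n \<alpha> (m - j) * of_nat (Suc j))
        (fa_gen (gam \<alpha> k (Suc m) (Suc j)) :: (int \<Rightarrow> int, 'a::field_char_0) falg)"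
proof -
  have "Bcoef n \<alpha> (Suc m - j) * of_nat (Suc m - j)
      = Bcoef n \<alpha> (m - j) * (of_int (knorm n \<alpha> - \<alpha> 0) + of_nat (m - j) :: 'a)"
    using Bcoef_Suc[of n \<alpha> "m - j"] by (simp only: Suc_diff_le[OF assms, symmetric])
  then have "Acoef \<alpha> k j * Bcoef n \<alpha> (m - j) * (of_int (knorm n \<alpha> - \<alpha> 0) + of_nat (m - j))
      = Acoef \<alpha> k j * Bcoef n \<alpha> (Suc m - j) * (of_nat (Suc m - j) :: 'a)"
    unfolding mult.assoc by (rule arg_cong[where f = "(*) (Acoef \<alpha> k j)", OF sym])
  moreover have "Acoef \<alpha> k j * Bcoef n \<alpha> (m - j) * (of_nat j - of_int (\<alpha> (-k)))
      = Acoef \<alpha> k (Suc j) * Bcoef n \<alpha> (m - j) * (of_nat (Suc j) :: 'a)"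
  proof -
    have "Acoef \<alpha> k (Suc j) * Bcoef n \<alpha> (m - j) * (of_nat (Suc j) :: 'a)
        = (Acoef \<alpha> k (Suc j) * of_nat (Suc j)) * Bcoef n \<alpha> (m - j)"
      by (simp only: mult_ac)
    also have "\<dots> = Acoef \<alpha> k j * (of_nat j - of_int (\<alpha> (-k))) * Bcoef n \<alpha> (m - j)"
      by (simp only: Acoef_Suc)
    finally show ?thesis by (simp only: mult_ac)
  qed
  ultimately show ?thesis
    by (simp only: Kbracket_evec_gam[OF assms] fa_smult_add_right fa_smult_fa_smult)
qed

lemma Kbracket_evec_divided_ad:
  "(\<Sum>j\<le>m. fa_smult (Acoef \<alpha> k j * Bcoef n \<alpha> (m - j)) (Kbracket n (evec k) (gam \<alpha> k m j)))
    = fa_smult (of_nat (Suc m)) (divided_ad n k \<alpha> (Suc m) :: (int \<Rightarrow> int, 'a::field_char_0) falg)"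
proof -
  define G where "G j = (fa_gen (gam \<alpha> k (Suc m) j) :: (int \<Rightarrow> int, 'a) falg)" for j
  define b where "b j = (Acoef \<alpha> k j * Bcoef n \<alpha> (Suc m - j) :: 'a)" for j
  have split: "fa_smult (Acoef \<alpha> k j * Bcoef n \<alpha> (m - j)) (Kbracket n (evec k) (gam \<alpha> k m j))
      = fa_smult (b j * of_nat (Suc m - j)) (G j) + fa_smult (b (Suc j) * of_nat (Suc j)) (G (Suc j))"
    if "j \<le> m" for j
    using smult_Kbracket_evec_gam[OF that] by (simp add: b_def G_def)
  have "(\<Sum>j\<le>m. fa_smult (Acoef \<alpha> k j * Bcoef n \<alpha> (m - j)) (Kbracket n (evec k) (gam \<alpha> k m j)))
      = (\<Sum>j\<le>m. fa_smult (b j * of_nat (Suc m - j)) (G j))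
        + (\<Sum>j\<le>m. fa_smult (b (Suc j) * of_nat (Suc j)) (G (Suc j)))"
    by (simp add: split sum.distrib)
  also have "\<dots> = (\<Sum>j\<le>Suc m. fa_smult (b j * of_nat (Suc m - j)) (G j))
        + (\<Sum>j\<le>Suc m. fa_smult (b j * of_nat j) (G j))"
    unfolding sum.atMost_Suc_shift[of "\<lambda>j. fa_smult (b j * of_nat j) (G j)"] by simp
  also have "\<dots> = (\<Sum>j\<le>Suc m. fa_smult (of_nat (Suc m) * b j) (G j))"
    unfolding sum.distrib[symmetric]
  proof (rule sum.cong[OF refl])
    fix j assume "j \<in> {..Suc m}"
    then have "b j * of_nat (Suc m - j) + b j * of_nat j = of_nat (Suc m) * b j"
      by (simp add: of_nat_diff algebra_simps del: of_nat_Suc)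
    then show "fa_smult (b j * of_nat (Suc m - j)) (G j) + fa_smult (b j * of_nat j) (G j)
        = fa_smult (of_nat (Suc m) * b j) (G j)"
      by (metis fa_smult_add_left)
  qed
  also have "\<dots> = fa_smult (of_nat (Suc m)) (divided_ad n k \<alpha> (Suc m))"
    by (simp only: divided_ad_def fa_smult_sum fa_smult_fa_smult b_def G_def mult.assoc)
  finally show ?thesis .
qed

lemma divided_ad_mult_eK:
  "cong_mod (IU n) (divided_ad n k \<alpha> m * eK k)
    (eK k * divided_ad n k \<alpha> m - of_nat (Suc m) * (divided_ad n k \<alpha> (Suc m) :: (int \<Rightarrow> int, 'a::field_char_0) falg))"
proof -
  interpret falg_ideal "IU n :: (int \<Rightarrow> int, 'a) falg set"
    unfolding IU_def by (rule falg_ideal_two_sided_ideal)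
  let ?c = "\<lambda>j. Acoef \<alpha> k j * Bcoef n \<alpha> (m - j) :: 'a"
  have "cong_mod (IU n) (\<Sum>j\<le>m. fa_smult (?c j) (fa_gen (gam \<alpha> k m j) * eK k))
      (\<Sum>j\<le>m. fa_smult (?c j) (eK k * fa_gen (gam \<alpha> k m j) - Kbracket n (evec k) (gam \<alpha> k m j)))"
    unfolding fa_smult_eq by (intro cong_mod_sum cong_mod_mult_left gen_mult_eK gam_Kidx)
  moreover have "(\<Sum>j\<le>m. fa_smult (?c j) (fa_gen (gam \<alpha> k m j) * eK k)) = divided_ad n k \<alpha> m * eK k"
    by (simp add: divided_ad_def sum_distrib_right fa_smult_mult_left)
  moreover have "(\<Sum>j\<le>m. fa_smult (?c j) (eK k * fa_gen (gam \<alpha> k m j) - Kbracket n (evec k) (gam \<alpha> k m j)))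
      = eK k * divided_ad n k \<alpha> m - (\<Sum>j\<le>m. fa_smult (?c j) (Kbracket n (evec k) (gam \<alpha> k m j)))"
    by (simp add: divided_ad_def sum_distrib_left mult_fa_smult fa_smult_diff_right sum_subtractf)
  ultimately show ?thesis
    by (simp only: Kbracket_evec_divided_ad) (simp only: fa_smult_eq fa_const_of_nat)
qed

end

section \<open>The twisted coproduct and antipode\<close>

context K_index
begin

lemma twistF_eq: "twistF k = fps_nth (binom_minus (fa_map Inl (hK k)) (fa_map Inr (eK k)) 0 :: (_, 'a::field_char_0) falg fps)"
  by (rule ext)
     (simp add: twistF_def binom_minus_def fa_eval_series_def tensor_def fa_mult_eq_times fa_falling_eq_fa_eval
       fa_pow_eq_power fa_map_fa_eval fa_map_power fa_eval_smult fa_smult_mult_left)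

lemma twistV_eq: "twistV k = fps_nth (binom_plus (hK k) (eK k) :: (_, 'a::field_char_0) falg fps)"
  by (rule ext)
     (simp add: twistV_def binom_plus_def fa_eval_series_def fa_mult_eq_times fa_falling_eq_fa_eval
       fa_pow_eq_power eK_def fa_antipode_gen_power fa_eval_smult fa_smult_mult_left mult_fa_smult
       fa_smult_fa_smult minus_one_power_square)

lemma DeltaRHS_eq:
  "DeltaRHS n k \<alpha> = fps_nth (fps_const (fa_map Inl (fa_gen \<alpha>))
       * Abs_fps (oneminus_pow (fa_map Inr (eK k)) (of_int (\<alpha> k - \<alpha> (-k))))
     + coproduct_tail (fa_map Inl (hK k)) (fa_map Inr (eK k)) (\<lambda>m. fa_map Inr (divided_ad n k \<alpha> m))
     :: (_, 'a::field_char_0) falg fps)"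
  by (rule ext)
     (simp add: DeltaRHS_def coproduct_tail_def fps_shifted_sum_def divided_ad_def tensor_def oneminus_pow_def
       fa_mult_eq_times fa_rising_eq_fa_eval fa_pow_eq_power fa_map_fa_eval fa_map_power fa_map_mult fa_map_sum
       fa_map_fa_smult fa_map_gen fa_eval_smult fa_smult_normalize sum_distrib_left mult.assoc mult_ac)

lemma SRHS_eq:
  "SRHS n k \<alpha> = fps_nth (- (Abs_fps (oneminus_pow (eK k) (- of_int (\<alpha> k - \<alpha> (-k))))
     * antipode_tail (hK k) (divided_ad n k \<alpha>)) :: (_, 'a::field_char_0) falg fps)"
  by (rule ext)
     (simp add: SRHS_def antipode_tail_def fps_mult_nth_rev divided_ad_def oneminus_pow_def
       fa_mult_eq_times fa_rising_eq_fa_eval fa_pow_eq_power fa_smult_normalize sum_distrib_left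
       sum_distrib_right mult.assoc mult_ac)

lemma antipode_setting_IU:
  "antipode_setting (IU n :: (_, 'a::field_char_0) falg set) (hK k) (eK k) (fa_gen \<alpha>) (divided_ad n k \<alpha>)
    (of_int (\<alpha> k - \<alpha> (-k)))"
  by (intro antipode_setting.intro shift_pair.intro antipode_setting_axioms.intro shift_pair_axioms.intro
      eK_mult_hK gen_mult_hK \<alpha>_Kidx hK_mult_divided_ad divided_ad_mult_eK divided_ad_0)
     (simp add: IU_def falg_ideal_two_sided_ideal)

lemma coproduct_setting_IUU:
  "coproduct_setting (IUU n :: (_, 'a::field_char_0) falg set) (fa_map Inl (hK k)) (fa_map Inr (eK k))
    (fa_map Inl (fa_gen \<alpha>)) (\<lambda>m. fa_map Inr (divided_ad n k \<alpha> m)) (of_int (\<alpha> k - \<alpha> (-k)))"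
proof -
  let ?H = "fa_map Inl (hK k) :: (_, 'a) falg" and ?E = "fa_map Inr (eK k) :: (_, 'a) falg"
    and ?X = "fa_map Inl (fa_gen \<alpha>) :: (_, 'a) falg" and ?Q = "\<lambda>m. fa_map Inr (divided_ad n k \<alpha> m) :: (_, 'a) falg"
  interpret IUU: falg_ideal "IUU n :: (_, 'a) falg set"
    unfolding IUU_def by (rule falg_ideal_two_sided_ideal)
  show ?thesis
  proof unfold_locales
    show "cong_mod (IUU n) (?E * ?H) (?H * ?E)"
      unfolding hK_eq eK_eq fa_map_gen by (rule IUU.cong_mod_sym) (intro cong_mod_IUU_swap hvec_Kidx evec_Kidx)
    show "cong_mod (IUU n) (?E * ?X) (?X * ?E)"
      unfolding eK_eq fa_map_gen by (rule IUU.cong_mod_sym) (intro cong_mod_IUU_swap \<alpha>_Kidx evec_Kidx)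
    show "cong_mod (IUU n) (?H * ?X) (?X * (?H + fa_const (of_int (\<alpha> k - \<alpha> (-k)))))"
      using cong_mod_IUU_fa_map[OF hK_mult_gen[OF \<alpha>_Kidx], of Inl] by (simp add: fa_map_mult fa_map_add fa_map_fa_const)
    show "cong_mod (IUU n) (?H * ?Q m) (?Q m * ?H)" for m
      unfolding divided_ad_def fa_map_sum fa_map_fa_smult hK_eq fa_map_gen
      by (rule IUU.cong_mod_mult_lincomb) (intro cong_mod_IUU_swap hvec_Kidx gam_Kidx)
    show "cong_mod (IUU n) (?Q m * ?E) (?E * ?Q m - of_nat (Suc m) * ?Q (Suc m))" for m
      using cong_mod_IUU_fa_map[OF divided_ad_mult_eK, of Inr]
      by (simp add: fa_map_mult fa_map_diff fa_map_of_nat del: of_nat_Suc)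
  qed
qed

lemma twisted_antipode_formula:
  "ps_cong (IU n) (twisted_antipode k (fa_gen \<alpha>)) (SRHS n k \<alpha> :: _ \<Rightarrow> (_, 'a::field_char_0) falg)"
proof -
  interpret antipode_setting "IU n :: (_, 'a) falg set" "hK k" "eK k" "fa_gen \<alpha>" "divided_ad n k \<alpha>"
    "of_int (\<alpha> k - \<alpha> (-k))"
    by (rule antipode_setting_IU)
  define Vi where "Vi = Abs_fps (ps_inv (twistV k :: _ \<Rightarrow> (_, 'a) falg))"
  have V: "Abs_fps (twistV k) = binom_plus (hK k) (eK k :: (_, 'a) falg)"
    by (simp add: twistV_eq fps_nth_inverse)
  have "binom_plus (hK k) (eK k) * Vi = 1"
    unfolding Vi_def V[symmetric]
    by (rule Abs_fps_mult_ps_inv) (simp add: twistV_eq binom_plus_def fa_eval_series_def fa_eval_const)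
  moreover have "twisted_antipode k (fa_gen \<alpha>) = fps_nth (binom_plus (hK k) (eK k) * fps_const (- fa_gen \<alpha>) * Vi)"
    by (simp add: twisted_antipode_def ps_mult_eq ps_const_eq fps_nth_inverse fa_antipode_gen V Vi_def)
  ultimately show ?thesis
    unfolding SRHS_eq by (simp only: ps_cong_fps_nth conj_binom_plus_const)
qed

lemma twisted_coproduct_formula:
  "ps_cong (IUU n) (twisted_coproduct k (fa_gen \<alpha>)) (DeltaRHS n k \<alpha> :: _ \<Rightarrow> (_, 'a::field_char_0) falg)"
proof -
  let ?H = "fa_map Inl (hK k) :: (_, 'a) falg" and ?E = "fa_map Inr (eK k) :: (_, 'a) falg"
  interpret coproduct_setting "IUU n :: (_, 'a) falg set" ?H ?E "fa_map Inl (fa_gen \<alpha>)"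
    "\<lambda>m. fa_map Inr (divided_ad n k \<alpha> m)" "of_int (\<alpha> k - \<alpha> (-k))"
    by (rule coproduct_setting_IUU)
  define Fi where "Fi = Abs_fps (ps_inv (twistF k :: _ \<Rightarrow> (_, 'a) falg))"
  have F: "Abs_fps (twistF k) = binom_minus ?H ?E 0"
    by (simp add: twistF_eq fps_nth_inverse)
  have "binom_minus ?H ?E 0 * Fi = 1"
    unfolding Fi_def F[symmetric]
    by (rule Abs_fps_mult_ps_inv) (simp add: twistF_eq binom_minus_def fa_eval_series_def fa_eval_const)
  moreover have "twisted_coproduct k (fa_gen \<alpha>)
      = fps_nth (binom_minus ?H ?E 0 * fps_const (fa_map Inl (fa_gen \<alpha>) + fa_map Inr (divided_ad n k \<alpha> 0)) * Fi)"
    by (simp add: twisted_coproduct_def ps_mult_eq ps_const_eq fps_nth_inverse fa_coprod0_gen fa_map_gen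
        divided_ad_0 F Fi_def)
  ultimately show ?thesis
    unfolding DeltaRHS_eq by (simp only: ps_cong_fps_nth conj_binom_minus_const)
qed

end

theorem mainTheorem17:
  fixes n :: nat and k :: int and \<alpha> :: "int \<Rightarrow> int"
  assumes "1 \<le> n" and "1 \<le> k" and "k \<le> int n"
    and "\<alpha> \<in> Kidx n" and "\<forall>i. 0 \<le> \<alpha> i"
  shows "ps_cong (IUU n) (twisted_coproduct k (fa_gen \<alpha>)) (DeltaRHS n k \<alpha> :: _ \<Rightarrow> (_, 'a::field_char_0) falg)
       \<and> ps_cong (IU n) (twisted_antipode k (fa_gen \<alpha>)) (SRHS n k \<alpha> :: _ \<Rightarrow> (_, 'a) falg)
       \<and> fa_counit (fa_gen \<alpha> :: (int \<Rightarrow> int, 'a) falg) = 0"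
proof -
  interpret K_index n k \<alpha>
    using assms by unfold_locales
  show ?thesis
    by (intro conjI twisted_coproduct_formula twisted_antipode_formula fa_counit_gen)
qed

end
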